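(* Let $d,D$ be positive integers with $D\geq4d$, and let $\phi$, $\phi_{c}$, $F_{c}$, $K$, $K^{+}$, $a_{0}$ be as in the context (in particular satisfying all the standing assumptions listed there). Then, for Lebesgue-almost every $c$ in the open ball $\{c:\|c\|<a_{0}\}$, the delay map $F_{c}$ is immersive at every point of $K$, i.e. $dF_{c}(x)v\neq0$ for every $x\in K$ and every nonzero $v\in\mathbb{R}^{d}$; equivalently this holds with probability one relative to the ball $\|c\|<a_{0}$.
   Context: Notation: $\pi_{i}$ denotes projection of $\mathbb{R}^{d}$ onto the $i$-th coordinate and $\mathbf{e}_{1}=(1,0,\ldots,0)\in\mathbb{R}^{d}$. For a multi-index $\alpha\in\mathbb{Z}_{\geq0}^{d}$, $p_{\alpha}(x)=\prod_{i=1}^{d}(\pi_{i}x)^{\alpha_{i}}$ and $|\alpha|=\sum_i\alpha_i$. Let $\mathcal{I}_{2D-1}$ be the set of multi-indices with $|\alpha|\leq2D-1$ and $D_{\alpha}$ its cardinality; parameters are $c=(c_{\alpha})_{\alpha\in\mathcal{I}_{2D-1}}\in\mathbb{R}^{D_{\alpha}}$ with the Euclidean norm. Let $\phi:\mathbb{R}^{d}\to\mathbb{R}^{d}$ be a diffeomorphism and $\phi_{c}(x)=\phi(x)+\mathbf{e}_{1}\sum_{\alpha}c_{\alpha}p_{\alpha}(x)$. The delay map is $F_{c}(x)=(\pi_{1}x,\pi_{1}\phi_{c}(x),\ldots,\pi_{1}\phi_{c}^{D-1}(x))\in\mathbb{R}^{D}$. Standing assumptions: $K$ is a compact ball in $\mathbb{R}^{d}$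 centered at the origin; $K^{+}$ is a larger compact ball containing $K$ such that $\phi^{j}(x)\in K^{+}$ for $x\in K$, $0\leq j\leq D-1$; $a_{0}>0$ is so small that $\phi_{c}^{j}(x)\in K^{+}$ for all $x\in K$, $0\leq j\leq D-1$, $\|c\|\leq a_{0}$. Moreover, for every $\|c\|\leq a_{0}$: (1) $\phi_{c}$ is a $C^{3}$ diffeomorphism of $\mathbb{R}^{d}$; (2) $\phi_{c}$ has exactly $m$ fixed points $\xi_{1}(c),\ldots,\xi_{m}(c)$ (labelled consistently in $c$); (3) $\phi_{c}$ has no other periodic points of period less than $2D$; (4) all fixed points are hyperbolic and $\pi_{1}\xi_{i}(c)\neq\pi_{1}\xi_{j}(c)$ for $i\neq j$; (5) $F_{c}$ is immersive at each fixed point. "Probability of $A$ relative to $B$" means $\mu(A\cap B)/\mu(B)$, $\mu$ Lebesgue measure. *)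

theory Defs
  imports "HOL-Analysis.Analysis" "HOL-Probability.Probability"
begin

definition monomial :: "('d::finite \<Rightarrow> nat) \<Rightarrow> real^'d \<Rightarrow> real" where
  "monomial \<alpha> x = (\<Prod>i\<in>UNIV. (x $ i) ^ (\<alpha> i))"

definition mdeg :: "('d::finite \<Rightarrow> nat) \<Rightarrow> nat" where
  "mdeg \<alpha> = (\<Sum>i\<in>UNIV. \<alpha> i)"

definition mindex :: "nat \<Rightarrow> ('d::finite \<Rightarrow> nat) set" where
  "mindex D = {\<alpha>. mdeg \<alpha> \<le> 2 * D - 1}"

definition pnorm :: "nat \<Rightarrow> (('d::finite \<Rightarrow> nat) \<Rightarrow> real) \<Rightarrow> real" where
  "pnorm D c = sqrt (\<Sum>\<alpha>\<in>mindex D. (c \<alpha>)\<^sup>2)"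

definition param_measure :: "nat \<Rightarrow> (('d::finite \<Rightarrow> nat) \<Rightarrow> real) measure" where
  "param_measure D = PiM (mindex D) (\<lambda>_. lborel)"

text \<open>phi_c(x) = phi(x) + e_1 * sum_alpha c_alpha p_alpha(x); the first coordinate is i1.\<close>
definition perturb ::
  "'d \<Rightarrow> nat \<Rightarrow> (real^'d \<Rightarrow> real^'d) \<Rightarrow> (('d::finite \<Rightarrow> nat) \<Rightarrow> real) \<Rightarrow> real^'d \<Rightarrow> real^'d" where
  "perturb i1 D \<phi> c x = \<phi> x + (\<Sum>\<alpha>\<in>mindex D. c \<alpha> * monomial \<alpha> x) *\<^sub>R axis i1 1"

fun Ck :: "nat \<Rightarrow> (real^'d::finite \<Rightarrow> 'b::real_normed_vector) \<Rightarrow> bool" where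
  "Ck 0 g = continuous_on UNIV g"
| "Ck (Suc k) g = ((\<forall>x. g differentiable (at x)) \<and>
      (\<forall>i. Ck k (\<lambda>x. frechet_derivative g (at x) (axis i 1))))"

definition diffeomorphism :: "(real^'d::finite \<Rightarrow> real^'d) \<Rightarrow> bool" where
  "diffeomorphism f \<longleftrightarrow> bij f \<and> (\<forall>x. f differentiable (at x)) \<and> (\<forall>y. inv f differentiable (at y))"

definition Ck_diffeomorphism :: "nat \<Rightarrow> (real^'d::finite \<Rightarrow> real^'d) \<Rightarrow> bool" where
  "Ck_diffeomorphism k f \<longleftrightarrow> bij f \<and> Ck k f \<and> Ck k (inv f)"

text \<open>Hyperbolic fixed point: Jacobian has no (complex) eigenvalue of modulus one.\<close>
definition hyperbolic_fixed_point :: "(real^'d::finite \<Rightarrow> real^'d) \<Rightarrow> real^'d \<Rightarrow> bool" where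
  "hyperbolic_fixed_point f p \<longleftrightarrow> f p = p \<and> f differentiable (at p) \<and>
     (let J = matrix (frechet_derivative f (at p)) in
      \<forall>z::complex. cmod z = 1 \<longrightarrow>
        det ((\<chi> i j. complex_of_real (J $ i $ j)) - mat z :: complex^'d^'d) \<noteq> 0)"

text \<open>Delay map F(x) = (pi_1 x, pi_1 f(x), ..., pi_1 f^{D-1}(x)) in R^D, given by its components;
  F is immersive at x iff all components are differentiable at x and dF(x) v \<noteq> 0 for v \<noteq> 0,
  where dF(x) v = (d(pi_1 o f^j)(x) v)_{j<D}.\<close>
definition delay_immersive_at :: "'d \<Rightarrow> nat \<Rightarrow> (real^'d::finite \<Rightarrow> real^'d) \<Rightarrow> real^'d \<Rightarrow> bool" where
  "delay_immersive_at i1 D f x \<longleftrightarrow>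
     (\<forall>j<D. (\<lambda>y. (f ^^ j) y $ i1) differentiable (at x)) \<and>
     (\<forall>v. v \<noteq> 0 \<longrightarrow> (\<exists>j<D. frechet_derivative (\<lambda>y. (f ^^ j) y $ i1) (at x) v \<noteq> 0))"

end

theory Submission
  imports Defs
begin

(* If F_c is not immersive at x, some v \<noteq> 0 is killed by all the derivatives d(pi_1 o phi_c^j)(x),
   j < D. Such an x is not a fixed point, since fixed points are immersive by hypothesis, and since
   phi_c has no other periodic points of period < 2D, the points x, phi_c x, ..., phi_c^(2d) x are
   distinct. Sampling the delay derivative at K = 2d + 1 times gives a map G(c, x, v) in R^K that
   vanishes at the bad triple. Polynomials of degree <= 2D - 1 that vanish along the orbit and have
   a prescribed derivative at a single orbit point make the derivative of G in c triangular, hence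
   onto; so for some set sigma of K monomials the partial derivative of G in those K coefficients
   is invertible. With the other coefficients frozen, the bad values of these K coefficients form
   the projection of a regular zero set of a C^1 map R^K x R^2d -> R^K. Near each of its points
   such a zero set is a Lipschitz graph over R^2d, so its projection is null because 2d < K.
   Fubini and a union over the finitely many sigma finish the proof. *)

section \<open>C^k maps and their first two derivatives\<close>

definition partial_deriv :: "(real^'d::finite \<Rightarrow> 'b::real_normed_vector) \<Rightarrow> 'd \<Rightarrow> real^'d \<Rightarrow> 'b" where
  "partial_deriv g i z = frechet_derivative g (at z) (axis i 1)"

declare Ck.simps(2)[simp del]

lemma Ck_Suc_iff: "Ck (Suc k) g \<longleftrightarrow> (\<forall>x. g differentiable (at x)) \<and> (\<forall>i. Ck k (partial_deriv g i))"
  by (simp add: partial_deriv_def[abs_def] Ck.simps(2))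

lemma Ck_imp_continuous_on: "Ck k g \<Longrightarrow> continuous_on UNIV g"
  by (cases k) (auto intro!: differentiable_imp_continuous_on
      simp: differentiable_on_def differentiable_at_withinI Ck_Suc_iff)

lemma Ck_Suc_imp_Ck: "Ck (Suc k) g \<Longrightarrow> Ck k g"
proof (induction k arbitrary: g)
  case 0
  then show ?case
    by (auto intro!: differentiable_imp_continuous_on
        simp: differentiable_on_def differentiable_at_withinI Ck_Suc_iff)
next
  case (Suc k)
  then show ?case by (simp add: Ck_Suc_iff)
qed

lemma Ck_mono: "Ck k g \<Longrightarrow> j \<le> k \<Longrightarrow> Ck j g"
  by (induction k) (use Ck_Suc_imp_Ck le_Suc_eq in blast)+

lemma partial_deriv_eq: "(g has_derivative g') (at z) \<Longrightarrow> partial_deriv g i z = g' (axis i 1)"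
  unfolding partial_deriv_def using frechet_derivative_at by metis

lemma Ck_const: "Ck k (\<lambda>z::real^'d::finite. c)"
proof (induction k arbitrary: c)
  case 0 then show ?case by simp
next
  case (Suc k)
  have "partial_deriv (\<lambda>z::real^'d. c) i = (\<lambda>z. 0)" for i
    by (rule ext, rule partial_deriv_eq) (rule has_derivative_const)
  then show ?case using Suc by (simp add: Ck_Suc_iff)
qed

lemma Ck_add: "Ck k f \<Longrightarrow> Ck k g \<Longrightarrow> Ck k (\<lambda>z. f z + g z)"
proof (induction k arbitrary: f g)
  case 0 then show ?case by (auto intro: continuous_on_add)
next
  case (Suc k)
  have df: "\<And>x. f differentiable (at x)" and dg: "\<And>x. g differentiable (at x)"
    using Suc.prems by (auto simp: Ck_Suc_iff)
  have "partial_deriv (\<lambda>z. f z + g z) i = (\<lambda>z. partial_deriv f i z + partial_deriv g i z)" for i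
  proof
    fix z
    have "((\<lambda>z. f z + g z) has_derivative
           (\<lambda>h. frechet_derivative f (at z) h + frechet_derivative g (at z) h)) (at z)"
      using df dg by (intro has_derivative_add) (auto simp: frechet_derivative_works[symmetric])
    then show "partial_deriv (\<lambda>z. f z + g z) i z = partial_deriv f i z + partial_deriv g i z"
      by (simp only: partial_deriv_eq) (simp add: partial_deriv_def)
  qed
  then show ?case using Suc df dg by (auto simp: Ck_Suc_iff)
qed

lemma Ck_mult:
  fixes f g :: "real^'d::finite \<Rightarrow> real"
  shows "Ck k f \<Longrightarrow> Ck k g \<Longrightarrow> Ck k (\<lambda>z. f z * g z)"
proof (induction k arbitrary: f g)
  case 0 then show ?case by (auto intro: continuous_on_mult)
next
  case (Suc k)
  have df: "\<And>x. f differentiable (at x)" and dg: "\<And>x. g differentiable (at x)"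
    using Suc.prems by (auto simp: Ck_Suc_iff)
  have "partial_deriv (\<lambda>z. f z * g z) i
          = (\<lambda>z. f z * partial_deriv g i z + partial_deriv f i z * g z)" for i
  proof
    fix z
    have "((\<lambda>z. f z * g z) has_derivative
           (\<lambda>h. f z * frechet_derivative g (at z) h + frechet_derivative f (at z) h * g z)) (at z)"
      using df dg by (intro has_derivative_mult) (auto simp: frechet_derivative_works[symmetric])
    then show "partial_deriv (\<lambda>z. f z * g z) i z = f z * partial_deriv g i z + partial_deriv f i z * g z"
      by (simp only: partial_deriv_eq) (simp add: partial_deriv_def)
  qed
  moreover have "Ck k f" "Ck k g" using Suc.prems Ck_Suc_imp_Ck by blast+
  ultimately show ?case using Suc df dg by (auto simp: Ck_Suc_iff intro!: Ck_add)
qed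

lemma Ck_prod:
  fixes f :: "'a \<Rightarrow> real^'d::finite \<Rightarrow> real"
  shows "finite S \<Longrightarrow> (\<And>a. a \<in> S \<Longrightarrow> Ck k (f a)) \<Longrightarrow> Ck k (\<lambda>z. \<Prod>a\<in>S. f a z)"
  by (induction S rule: finite_induct) (auto intro: Ck_mult Ck_const)

lemma Ck_power:
  fixes f :: "real^'d::finite \<Rightarrow> real"
  shows "Ck k f \<Longrightarrow> Ck k (\<lambda>z. f z ^ n)"
  by (induction n) (auto intro: Ck_mult Ck_const)

lemma Ck_component: "Ck k (\<lambda>z::real^'d::finite. z $ j)"
proof (cases k)
  case 0 then show ?thesis by (simp add: continuous_on_component)
next
  case (Suc k')
  have "partial_deriv (\<lambda>z::real^'d. z $ j) i = (\<lambda>z. axis i 1 $ j)" for i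
    by (rule ext, rule partial_deriv_eq)
      (rule bounded_linear.has_derivative[OF bounded_linear_vec_nth has_derivative_ident])
  moreover have "(\<lambda>z::real^'d. z $ j) differentiable (at x)" for x
    by (rule bounded_linear_imp_differentiable[OF bounded_linear_vec_nth])
  ultimately show ?thesis using Suc by (simp only: Ck_Suc_iff) (simp add: Ck_const)
qed

lemma Ck_monomial: "Ck k (monomial \<alpha>)"
  unfolding monomial_def[abs_def] by (intro Ck_prod Ck_power Ck_component) auto

text \<open>The derivatives are spelled out through partial derivatives, so that they are linear in the
  direction even where the map is not differentiable, and are continuous in the base point by the
  very definition of \<open>Ck\<close>.\<close>

definition deriv1 :: "(real^'d::finite \<Rightarrow> 'b::real_normed_vector) \<Rightarrow> real^'d \<Rightarrow> real^'d \<Rightarrow> 'b" where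
  "deriv1 g z w = (\<Sum>i\<in>UNIV. (w $ i) *\<^sub>R partial_deriv g i z)"

definition deriv2 ::
  "(real^'d::finite \<Rightarrow> 'b::real_normed_vector) \<Rightarrow> real^'d \<Rightarrow> real^'d \<Rightarrow> real^'d \<Rightarrow> 'b" where
  "deriv2 g z a w = (\<Sum>i\<in>UNIV. (w $ i) *\<^sub>R deriv1 (partial_deriv g i) z a)"

lemma has_derivative_deriv1:
  assumes "Ck (Suc k) g"
  shows "(g has_derivative deriv1 g z) (at z)"
proof -
  have dg: "g differentiable (at z)" using assms by (simp add: Ck_Suc_iff)
  then have lin: "linear (frechet_derivative g (at z))"
    using frechet_derivative_works has_derivative_linear by blast
  have "frechet_derivative g (at z) w = deriv1 g z w" for w
  proof -
    have "frechet_derivative g (at z) w = frechet_derivative g (at z) (\<Sum>i\<in>UNIV. (w $ i) *\<^sub>R axis i 1)"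
      using basis_expansion[of w] by (simp add: scalar_mult_eq_scaleR)
    also have "\<dots> = deriv1 g z w"
      using lin by (simp add: linear_sum linear_scale deriv1_def partial_deriv_def)
    finally show ?thesis .
  qed
  then show ?thesis using dg frechet_derivative_works by (metis ext)
qed

lemma deriv1_add: "deriv1 g z (a + b) = deriv1 g z a + deriv1 g z b"
  and deriv1_scale: "deriv1 g z (r *\<^sub>R a) = r *\<^sub>R deriv1 g z a"
  and deriv1_zero: "deriv1 g z 0 = 0"
  by (auto simp: deriv1_def sum.distrib scaleR_add_left scaleR_sum_right)

lemma deriv2_add: "deriv2 g z (a + b) w = deriv2 g z a w + deriv2 g z b w"
  and deriv2_scale: "deriv2 g z (r *\<^sub>R a) w = r *\<^sub>R deriv2 g z a w"
  and deriv2_zero: "deriv2 g z 0 w = 0"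
  by (auto simp: deriv2_def deriv1_add deriv1_scale deriv1_zero scaleR_add_right sum.distrib
      scaleR_sum_right mult.commute)

lemma has_vector_derivative_chain:
  assumes "(Z has_vector_derivative Z') (at t)" "(g has_derivative g') (at (Z t))"
  shows "((\<lambda>t. g (Z t)) has_vector_derivative g' Z') (at t)"
proof -
  have "((g \<circ> Z) has_derivative (g' \<circ> (\<lambda>h. h *\<^sub>R Z'))) (at t)"
    using assms by (intro diff_chain_at) (auto simp: has_vector_derivative_def)
  moreover have "linear g'" using assms(2) has_derivative_linear by blast
  ultimately show ?thesis
    by (simp add: has_vector_derivative_def o_def linear_scale)
qed

lemma has_vector_derivative_vec_nth:
  "(W has_vector_derivative W') F \<Longrightarrow> ((\<lambda>t. W t $ i) has_vector_derivative W' $ i) F"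
  by (rule bounded_linear.has_vector_derivative[OF bounded_linear_vec_nth])

lemma has_vector_derivative_vec_lambda:
  fixes f :: "real \<Rightarrow> real^'k::finite"
  assumes "\<And>\<kappa>. ((\<lambda>s. f s $ \<kappa>) has_vector_derivative f' $ \<kappa>) (at t)"
  shows "(f has_vector_derivative f') (at t)"
  unfolding has_vector_derivative_def
proof (subst has_derivative_componentwise_within, intro ballI)
  fix i :: "real^'k" assume "i \<in> Basis"
  then obtain \<kappa> where i: "i = axis \<kappa> 1" by (auto simp: Basis_vec_def)
  have "((\<lambda>s. f s $ \<kappa>) has_derivative (\<lambda>x. x *\<^sub>R f' $ \<kappa>)) (at t)"
    using assms[of \<kappa>] by (simp add: has_vector_derivative_def)
  then show "((\<lambda>x. f x \<bullet> i) has_derivative (\<lambda>x. (x *\<^sub>R f') \<bullet> i)) (at t)"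
    by (simp add: i cart_eq_inner_axis[symmetric])
qed

lemma has_vector_derivative_deriv1:
  assumes g: "Ck (Suc (Suc k)) g"
    and Z: "(Z has_vector_derivative Z') (at t)" and W: "(W has_vector_derivative W') (at t)"
  shows "((\<lambda>t. deriv1 g (Z t) (W t)) has_vector_derivative
           (deriv2 g (Z t) Z' (W t) + deriv1 g (Z t) W')) (at t)"
proof -
  have "((\<lambda>t. (\<Sum>i\<in>UNIV. (W t $ i) *\<^sub>R partial_deriv g i (Z t))) has_vector_derivative
          (\<Sum>i\<in>UNIV. (W t $ i) *\<^sub>R deriv1 (partial_deriv g i) (Z t) Z'
                      + (W' $ i) *\<^sub>R partial_deriv g i (Z t))) (at t)"
  proof (rule has_vector_derivative_sum)
    fix i
    have "((\<lambda>t. W t $ i) has_field_derivative W' $ i) (at t)"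
      using has_vector_derivative_vec_nth[OF W]
      by (simp add: has_real_derivative_iff_has_vector_derivative)
    moreover have "((\<lambda>t. partial_deriv g i (Z t)) has_vector_derivative
                     deriv1 (partial_deriv g i) (Z t) Z') (at t)"
      using g by (intro has_vector_derivative_chain[OF Z] has_derivative_deriv1[of k]) (simp add: Ck_Suc_iff)
    ultimately show "((\<lambda>t. (W t $ i) *\<^sub>R partial_deriv g i (Z t)) has_vector_derivative
          (W t $ i) *\<^sub>R deriv1 (partial_deriv g i) (Z t) Z' + (W' $ i) *\<^sub>R partial_deriv g i (Z t)) (at t)"
      using has_vector_derivative_scaleR by fastforce
  qed
  then show ?thesis by (simp add: deriv1_def[of g] deriv2_def sum.distrib)
qed

lemma continuous_on_deriv1:
  assumes g: "Ck (Suc k) g" and Z: "continuous_on S Z" and W: "continuous_on S W"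
  shows "continuous_on S (\<lambda>p. deriv1 g (Z p) (W p))"
proof -
  have "continuous_on UNIV (partial_deriv g i)" for i
    using g Ck_imp_continuous_on by (auto simp: Ck_Suc_iff)
  then have "continuous_on S (\<lambda>p. partial_deriv g i (Z p))" for i
    using continuous_on_compose2[OF _ Z] by blast
  then show ?thesis unfolding deriv1_def by (intro continuous_intros W)
qed

lemma continuous_on_deriv2:
  assumes g: "Ck (Suc (Suc k)) g"
    and Z: "continuous_on S Z" and A: "continuous_on S A" and W: "continuous_on S W"
  shows "continuous_on S (\<lambda>p. deriv2 g (Z p) (A p) (W p))"
proof -
  have "Ck (Suc k) (partial_deriv g i)" for i using g by (auto simp: Ck_Suc_iff)
  then have "continuous_on S (\<lambda>p. deriv1 (partial_deriv g i) (Z p) (A p))" for i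
    using continuous_on_deriv1 Z A by blast
  then show ?thesis unfolding deriv2_def by (intro continuous_intros W)
qed

lemma has_derivative_inj_if_inverse_differentiable:
  fixes f :: "'a::real_normed_vector \<Rightarrow> 'a"
  assumes bij: "bij f" and f': "(f has_derivative f') (at z)"
    and inv: "inv f differentiable (at (f z))"
  shows "inj f'"
proof -
  obtain g' where g': "(inv f has_derivative g') (at (f z))"
    using inv by (auto simp: differentiable_def)
  have "((inv f \<circ> f) has_derivative (g' \<circ> f')) (at z)" by (rule diff_chain_at[OF f' g'])
  moreover have "inv f \<circ> f = id" using bij by (simp add: bij_is_inj)
  ultimately have "g' \<circ> f' = id"
    using has_derivative_id has_derivative_unique by metis
  then show ?thesis by (metis inj_on_id inj_on_imageI2)
qed

section \<open>Polynomials of bounded total degree\<close>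

inductive poly_deg_le :: "nat \<Rightarrow> (real^'d::finite \<Rightarrow> real) \<Rightarrow> bool" where
  monomial: "mdeg \<alpha> \<le> n \<Longrightarrow> poly_deg_le n (monomial \<alpha>)"
| zero: "poly_deg_le n (\<lambda>z. 0)"
| add: "poly_deg_le n f \<Longrightarrow> poly_deg_le n g \<Longrightarrow> poly_deg_le n (\<lambda>z. f z + g z)"
| scale: "poly_deg_le n f \<Longrightarrow> poly_deg_le n (\<lambda>z. a * f z)"

lemma monomial_mult: "monomial \<alpha> z * monomial \<beta> z = monomial (\<lambda>i. \<alpha> i + \<beta> i) z"
  by (simp add: monomial_def power_add prod.distrib)

lemma mdeg_add: "mdeg (\<lambda>i. \<alpha> i + \<beta> i) = mdeg \<alpha> + mdeg \<beta>"
  by (simp add: mdeg_def sum.distrib)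

lemma poly_deg_le_monomial_mult:
  "poly_deg_le m g \<Longrightarrow> mdeg \<alpha> \<le> n \<Longrightarrow> poly_deg_le (n + m) (\<lambda>z. monomial \<alpha> z * g z)"
proof (induction rule: poly_deg_le.induct)
  case (monomial \<beta> m)
  then have "mdeg (\<lambda>i. \<alpha> i + \<beta> i) \<le> n + m" by (simp add: mdeg_add)
  from poly_deg_le.monomial[OF this] show ?case by (simp add: monomial_mult)
next
  case (zero m) then show ?case using poly_deg_le.zero by simp
next
  case (add m f g) then show ?case using poly_deg_le.add[of "n + m"] by (simp add: distrib_left)
next
  case (scale m f a) then show ?case using poly_deg_le.scale[of "n + m" _ a] by (simp add: ac_simps)
qed

lemma poly_deg_le_mult:
  "poly_deg_le n f \<Longrightarrow> poly_deg_le m g \<Longrightarrow> poly_deg_le (n + m) (\<lambda>z. f z * g z)"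
proof (induction rule: poly_deg_le.induct)
  case (monomial \<alpha> n) then show ?case using poly_deg_le_monomial_mult by blast
next
  case (zero n) then show ?case using poly_deg_le.zero by simp
next
  case (add n f1 f2) then show ?case using poly_deg_le.add[of "n + m"] by (simp add: distrib_right)
next
  case (scale n f a) then show ?case using poly_deg_le.scale[of "n + m" _ a] by (simp add: ac_simps)
qed

lemma poly_deg_le_const: "poly_deg_le n (\<lambda>z::real^'d::finite. a)"
proof -
  have "monomial (\<lambda>_. 0) = (\<lambda>z::real^'d. 1)" by (simp add: monomial_def[abs_def])
  moreover have "poly_deg_le n (monomial (\<lambda>_::'d. 0))" by (rule monomial) (simp add: mdeg_def)
  ultimately show ?thesis using scale[of n "\<lambda>z::real^'d. 1" a] by simp
qed

lemma poly_deg_le_component: "poly_deg_le 1 (\<lambda>z::real^'d::finite. z $ i)"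
proof -
  have "monomial (\<lambda>j. if j = i then 1 else 0) = (\<lambda>z::real^'d. z $ i)"
    by (rule ext) (simp add: monomial_def if_distrib[of "power _"] prod.delta cong: if_cong)
  moreover have "poly_deg_le 1 (monomial (\<lambda>j::'d. if j = i then 1 else 0))"
    by (rule monomial) (simp add: mdeg_def)
  ultimately show ?thesis by simp
qed

lemma poly_deg_le_sum:
  "finite S \<Longrightarrow> (\<And>a. a \<in> S \<Longrightarrow> poly_deg_le n (f a)) \<Longrightarrow> poly_deg_le n (\<lambda>z. \<Sum>a\<in>S. f a z)"
  by (induction S rule: finite_induct) (auto intro: poly_deg_le.intros)

lemma poly_deg_le_prod:
  "finite S \<Longrightarrow> (\<And>a. a \<in> S \<Longrightarrow> poly_deg_le n (f a)) \<Longrightarrow>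
     poly_deg_le (n * card S) (\<lambda>z. \<Prod>a\<in>S. f a z)"
proof (induction S rule: finite_induct)
  case empty then show ?case by (simp add: poly_deg_le_const)
next
  case (insert x F)
  then have "poly_deg_le (n + n * card F) (\<lambda>z. f x z * (\<Prod>a\<in>F. f a z))"
    by (intro poly_deg_le_mult) auto
  then show ?case using insert by simp
qed

lemma poly_deg_le_diff: "poly_deg_le n f \<Longrightarrow> poly_deg_le n g \<Longrightarrow> poly_deg_le n (\<lambda>z. f z - g z)"
  using add[of n f "\<lambda>z. (-1) * g z"] scale[of n g "-1"] by simp

lemma poly_deg_le_inner_diff: "poly_deg_le 1 (\<lambda>z::real^'d::finite. (z - y) \<bullet> w)"
proof -
  have "(\<lambda>z::real^'d. (z - y) \<bullet> w) = (\<lambda>z. \<Sum>i\<in>UNIV. w $ i * (z $ i - y $ i))"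
    by (rule ext) (simp add: inner_vec_def mult.commute)
  moreover have "poly_deg_le 1 (\<lambda>z::real^'d. \<Sum>i\<in>UNIV. w $ i * (z $ i - y $ i))"
    by (intro poly_deg_le_sum scale poly_deg_le_diff poly_deg_le_component poly_deg_le_const) auto
  ultimately show ?thesis by simp
qed

lemma poly_deg_le_inner_self_diff: "poly_deg_le 2 (\<lambda>z::real^'d::finite. (z - y) \<bullet> (z - y))"
proof -
  have "(\<lambda>z::real^'d. (z - y) \<bullet> (z - y)) = (\<lambda>z. \<Sum>i\<in>UNIV. (z $ i - y $ i) * (z $ i - y $ i))"
    by (rule ext) (simp add: inner_vec_def)
  moreover have "poly_deg_le (1 + 1) (\<lambda>z::real^'d. \<Sum>i\<in>UNIV. (z $ i - y $ i) * (z $ i - y $ i))"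
    by (intro poly_deg_le_sum poly_deg_le_mult poly_deg_le_diff poly_deg_le_component
        poly_deg_le_const) auto
  ultimately show ?thesis by (simp add: numeral_2_eq_2)
qed

section \<open>Linear algebra\<close>

lemma vec_expand: "(x::real^'k::finite) = (\<Sum>\<kappa>\<in>UNIV. (x $ \<kappa>) *\<^sub>R axis \<kappa> 1)"
  using basis_expansion[of x] by (simp add: scalar_mult_eq_scaleR)

lemma span_triangular_eq_UNIV:
  fixes u :: "nat \<Rightarrow> real^'k::finite" and \<iota> :: "'k \<Rightarrow> nat"
  assumes bij: "bij_betw \<iota> UNIV {1..K}"
    and low: "\<And>j \<kappa>. j \<in> {1..K} \<Longrightarrow> \<iota> \<kappa> < j \<Longrightarrow> u j $ \<kappa> = 0"
    and diag: "\<And>\<kappa>. u (\<iota> \<kappa>) $ \<kappa> \<noteq> 0"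
  shows "span (u ` {1..K}) = UNIV"
proof -
  let ?U = "span (u ` {1..K})"
  have inj: "inj \<iota>" and rng: "\<And>\<kappa>. \<iota> \<kappa> \<in> {1..K}" using bij by (auto simp: bij_betw_def)
  \<comment> \<open>Descending induction on \<open>\<iota> \<kappa>\<close>: \<open>u (\<iota> \<kappa>)\<close> is a nonzero multiple of \<open>axis \<kappa> 1\<close> plus
    multiples of axes \<open>\<kappa>'\<close> with \<open>\<iota> \<kappa>' > \<iota> \<kappa>\<close>.\<close>
  have ax: "axis \<kappa> 1 \<in> ?U" if "K - \<iota> \<kappa> = n" for n \<kappa>
    using that
  proof (induction n arbitrary: \<kappa> rule: less_induct)
    case (less n \<kappa>)
    define j where "j = \<iota> \<kappa>"
    have uj: "u j \<in> ?U" using rng by (auto simp: j_def intro: span_base)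
    have rest: "(u j $ \<kappa>') *\<^sub>R axis \<kappa>' 1 \<in> ?U" if "\<kappa>' \<noteq> \<kappa>" for \<kappa>'
    proof (cases "\<iota> \<kappa>' < j")
      case True then show ?thesis using low[of j \<kappa>'] rng by (simp add: j_def span_zero)
    next
      case False
      then have "\<iota> \<kappa>' \<noteq> j" using inj that by (auto simp: j_def inj_def)
      with False have "\<iota> \<kappa>' > j" by simp
      then have "K - \<iota> \<kappa>' < n" using rng[of \<kappa>'] rng[of \<kappa>] less.prems by (auto simp: j_def)
      then show ?thesis using less.IH by (auto intro: span_scale)
    qed
    have "u j = (\<Sum>\<kappa>'\<in>UNIV. (u j $ \<kappa>') *\<^sub>R axis \<kappa>' 1)" by (rule vec_expand)
    also have "\<dots> = (u j $ \<kappa>) *\<^sub>R axis \<kappa> 1 + (\<Sum>\<kappa>'\<in>UNIV - {\<kappa>}. (u j $ \<kappa>') *\<^sub>R axis \<kappa>' 1)"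
      by (rule sum.remove) auto
    finally have "u j = (u j $ \<kappa>) *\<^sub>R axis \<kappa> 1 + (\<Sum>\<kappa>'\<in>UNIV - {\<kappa>}. (u j $ \<kappa>') *\<^sub>R axis \<kappa>' 1)" .
    then have "(u j $ \<kappa>) *\<^sub>R axis \<kappa> 1 = u j - (\<Sum>\<kappa>'\<in>UNIV - {\<kappa>}. (u j $ \<kappa>') *\<^sub>R axis \<kappa>' 1)"
      by (simp add: algebra_simps)
    also have "\<dots> \<in> ?U" using uj rest by (intro span_diff span_sum) auto
    finally have "(u j $ \<kappa>) *\<^sub>R axis \<kappa> 1 \<in> ?U" .
    then have "(1 / u j $ \<kappa>) *\<^sub>R ((u j $ \<kappa>) *\<^sub>R axis \<kappa> 1) \<in> ?U" by (rule span_scale)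
    then show ?case using diag[of \<kappa>] by (simp add: j_def)
  qed
  have "x \<in> ?U" for x
  proof -
    have "(\<Sum>\<kappa>\<in>UNIV. (x $ \<kappa>) *\<^sub>R axis \<kappa> 1) \<in> ?U"
      using ax by (intro span_sum span_scale) auto
    then show ?thesis by (subst vec_expand)
  qed
  then show ?thesis by auto
qed

lemma spanning_image_contains_basis:
  fixes L :: "'a \<Rightarrow> 'v::euclidean_space"
  assumes fin: "finite I" and sp: "span (L ` I) = UNIV"
  shows "\<exists>B\<subseteq>I. card B = DIM('v) \<and> inj_on L B \<and> span (L ` B) = UNIV"
proof -
  obtain B' where B': "B' \<subseteq> L ` I" "independent B'" "L ` I \<subseteq> span B'" "card B' = dim (L ` I)"
    using basis_exists by blast
  have dimI: "dim (L ` I) = DIM('v)" using sp by (metis dim_UNIV dim_span)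
  define B where "B = inv_into I L ` B'"
  have BI: "B \<subseteq> I" using B'(1) by (auto simp: B_def inv_into_into)
  have LB: "L ` B = B'" using B'(1) by (auto simp: B_def f_inv_into_f image_image) (metis f_inv_into_f image_eqI subsetD)
  have inj1: "inj_on (inv_into I L) B'" using B'(1) by (rule inj_on_inv_into)
  have cardB: "card B = card B'" unfolding B_def using inj1 by (rule card_image)
  have injL: "inj_on L B"
  proof (rule inj_onI)
    fix a b assume "a \<in> B" "b \<in> B" "L a = L b"
    then obtain x y where xy: "x \<in> B'" "y \<in> B'" "a = inv_into I L x" "b = inv_into I L y"
      by (auto simp: B_def)
    then have "L a = x" "L b = y" using B'(1) by (auto simp: f_inv_into_f subset_eq)
    then show "a = b" using xy \<open>L a = L b\<close> by simp
  qed
  have "span B' = UNIV" using B'(3) sp by (metis span_eq_iff span_minimal subspace_span top.extremum_uniqueI)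
  then show ?thesis using BI cardB injL LB B'(4) dimI by auto
qed

section \<open>Projections of regular zero sets are negligible\<close>

lemma has_vector_derivative_line_shift:
  fixes h :: "'a::real_normed_vector" and F :: "'a \<Rightarrow> 'b::real_normed_vector"
  assumes "((\<lambda>s. F ((p + t *\<^sub>R h) + s *\<^sub>R h)) has_vector_derivative G) (at 0)"
  shows "((\<lambda>s. F (p + s *\<^sub>R h)) has_vector_derivative G) (at t)"
proof -
  have "((\<lambda>s. s - t) has_vector_derivative 1) (at t)"
    using has_vector_derivative_diff[OF has_vector_derivative_id has_vector_derivative_const[of t]]
    by (simp add: id_def)
  then have "((\<lambda>s. F ((p + t *\<^sub>R h) + s *\<^sub>R h)) \<circ> (\<lambda>s. s - t) has_vector_derivative 1 *\<^sub>R G) (at t)"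
    using vector_diff_chain_at assms by fastforce
  moreover have "(p + t *\<^sub>R h) + (s - t) *\<^sub>R h = p + s *\<^sub>R h" for s
    by (simp add: algebra_simps)
  ultimately show ?thesis by (simp add: o_def)
qed

lemma continuous_linear_family_locally_uniform:
  fixes DF :: "'a::euclidean_space \<Rightarrow> 'a \<Rightarrow> 'b::real_normed_vector"
  assumes lin: "\<And>p. linear (DF p)" and cont: "\<And>h. continuous_on UNIV (\<lambda>p. DF p h)" and e: "e > 0"
  shows "\<exists>r>0. \<forall>p\<in>ball p0 r. \<forall>h. norm (DF p h - DF p0 h) \<le> e * norm h"
proof -
  define N where "N = real DIM('a)"
  have N: "N > 0" by (simp add: N_def)
  have "\<forall>\<^sub>F p in at p0. \<forall>b\<in>Basis. dist (DF p b) (DF p0 b) < e / N"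
  proof (rule eventually_ball_finite)
    show "\<forall>b\<in>Basis. \<forall>\<^sub>F p in at p0. dist (DF p b) (DF p0 b) < e / N"
    proof
      fix b :: 'a
      have "((\<lambda>p. DF p b) \<longlongrightarrow> DF p0 b) (at p0)"
        using cont[of b] by (simp add: continuous_on_eq_continuous_at isCont_def)
      then show "\<forall>\<^sub>F p in at p0. dist (DF p b) (DF p0 b) < e / N"
        using N e by (auto simp: tendsto_iff)
    qed
  qed simp
  then obtain r where r: "r > 0"
    "\<And>p. p \<noteq> p0 \<Longrightarrow> dist p p0 < r \<Longrightarrow> \<forall>b\<in>Basis. dist (DF p b) (DF p0 b) < e / N"
    by (auto simp: eventually_at)
  have "norm (DF p h - DF p0 h) \<le> e * norm h" if "p \<in> ball p0 r" "p \<noteq> p0" for p h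
  proof -
    have bb: "norm (DF p b - DF p0 b) \<le> e / N" if "b \<in> Basis" for b
      using r(2)[of p] \<open>p \<in> ball p0 r\<close> \<open>p \<noteq> p0\<close> that by (auto simp: dist_norm norm_minus_commute less_imp_le)
    have expand: "DF q h = (\<Sum>b\<in>Basis. (h \<bullet> b) *\<^sub>R DF q b)" for q
      using lin[of q] by (subst euclidean_representation[of h, symmetric])
        (simp add: linear_sum linear_scale)
    have "norm (DF p h - DF p0 h) = norm (\<Sum>b\<in>Basis. (h \<bullet> b) *\<^sub>R (DF p b - DF p0 b))"
      by (simp add: expand[of p] expand[of p0] sum_subtractf scaleR_diff_right)
    also have "\<dots> \<le> (\<Sum>b\<in>(Basis::'a set). norm h * (e / N))"
    proof (rule order_trans[OF norm_sum sum_mono])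
      fix b :: 'a assume b: "b \<in> Basis"
      have "\<bar>h \<bullet> b\<bar> * norm (DF p b - DF p0 b) \<le> norm h * (e / N)"
        using bb[OF b] b by (intro mult_mono) (auto simp: Basis_le_norm)
      then show "norm ((h \<bullet> b) *\<^sub>R (DF p b - DF p0 b)) \<le> norm h * (e / N)" by simp
    qed
    also have "\<dots> = e * norm h" using N by (simp add: N_def)
    finally show ?thesis .
  qed
  then show ?thesis using r(1) e by (metis diff_self mult_nonneg_nonneg norm_ge_zero norm_zero less_imp_le)
qed

lemma linearization_error_near:
  fixes F :: "'a::euclidean_space \<Rightarrow> 'b::real_normed_vector"
  assumes der: "\<And>p h. ((\<lambda>s. F (p + s *\<^sub>R h)) has_vector_derivative DF p h) (at 0)"
    and lin: "\<And>p. linear (DF p)" and cont: "\<And>h. continuous_on UNIV (\<lambda>p. DF p h)" and e: "e > 0"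
  obtains r where "r > 0" and "\<And>p1 p2. p1 \<in> ball p0 r \<Longrightarrow> p2 \<in> ball p0 r \<Longrightarrow>
      norm (F p2 - F p1 - DF p0 (p2 - p1)) \<le> 3 * e * norm (p2 - p1)"
proof -
  obtain r where r: "r > 0" "\<And>p h. p \<in> ball p0 r \<Longrightarrow> norm (DF p h - DF p0 h) \<le> e * norm h"
    using continuous_linear_family_locally_uniform[OF lin cont e, of p0] by blast
  have "norm (F p2 - F p1 - DF p0 (p2 - p1)) \<le> 3 * e * norm (p2 - p1)"
    if p12: "p1 \<in> ball p0 r" "p2 \<in> ball p0 r" for p1 p2
  proof -
    define h where "h = p2 - p1"
    have on_segment: "p1 + s *\<^sub>R h \<in> ball p0 r" if "s \<in> {0..1}" for s
    proof -
      have "p1 + s *\<^sub>R h = (1 - s) *\<^sub>R p1 + s *\<^sub>R p2" by (simp add: h_def algebra_simps)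
      also have "\<dots> \<in> ball p0 r" using that p12 by (intro convexD_alt convex_ball) auto
      finally show ?thesis .
    qed
    have d: "((\<lambda>s. F (p1 + s *\<^sub>R h)) has_vector_derivative DF (p1 + s *\<^sub>R h) h)
        (at s within {0..1})" for s
      by (rule has_vector_derivative_at_within, rule has_vector_derivative_line_shift) (rule der)
    have B: "norm (DF (p1 + s *\<^sub>R h) h - DF (p1 + 0 *\<^sub>R h) h) \<le> 2 * e * norm h"
      if "s \<in> {0..1}" for s
      using r(2)[OF on_segment[OF that], of h] r(2)[OF p12(1), of h]
        norm_triangle_ineq4[of "DF (p1 + s *\<^sub>R h) h - DF p0 h" "DF p1 h - DF p0 h"] by simp
    have "norm (F (p1 + 1 *\<^sub>R h) - F (p1 + 0 *\<^sub>R h) - (1 - 0) *\<^sub>R DF (p1 + 0 *\<^sub>R h) h)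
        \<le> norm (1 - 0::real) * (2 * e * norm h)"
      by (rule vector_differentiable_bound_linearization[OF d _ B])
        (auto simp: closed_segment_eq_real_ivl)
    then have "norm (F p2 - F p1 - DF p1 h) \<le> 2 * e * norm h" by (simp add: h_def)
    moreover have "norm (DF p1 h - DF p0 h) \<le> e * norm h" using r(2)[OF p12(1)] .
    ultimately show ?thesis
      using norm_triangle_ineq[of "F p2 - F p1 - DF p1 h" "DF p1 h - DF p0 h"] by (simp add: h_def)
  qed
  from that[OF r(1) this] show ?thesis .
qed

text \<open>Near a zero at which the derivative in the first factor is injective, the zero set of \<open>F\<close>
  is the graph of a Lipschitz function of the second factor (the Lipschitz half of the implicit
  function theorem).\<close>

lemma zeros_Lipschitz_graph_near_regular_point:
  fixes F :: "'k::euclidean_space \<times> 'm::euclidean_space \<Rightarrow> 'k"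
  assumes der: "\<And>p h. ((\<lambda>s. F (p + s *\<^sub>R h)) has_vector_derivative DF p h) (at 0)"
    and lin: "\<And>p. linear (DF p)" and cont: "\<And>h. continuous_on UNIV (\<lambda>p. DF p h)"
    and inj: "inj (\<lambda>u. DF p0 (u, 0))"
  obtains r L where "r > 0" and "\<And>p1 p2. p1 \<in> ball p0 r \<Longrightarrow> p2 \<in> ball p0 r \<Longrightarrow>
      F p1 = 0 \<Longrightarrow> F p2 = 0 \<Longrightarrow> norm (fst p2 - fst p1) \<le> L * norm (snd p2 - snd p1)"
proof -
  define A where "A u = DF p0 (u, 0)" for u
  have "linear A"
    unfolding A_def[abs_def] by (rule linear_compose[OF _ lin, unfolded o_def]) (rule linearI; simp)
  then obtain \<kappa> where \<kappa>: "\<kappa> > 0" "\<And>u. \<kappa> * norm u \<le> norm (A u)"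
    using linear_inj_bounded_below_pos inj unfolding A_def[abs_def] by blast
  have "linear (\<lambda>y. DF p0 (0, y))"
    by (rule linear_compose[OF _ lin, unfolded o_def]) (rule linearI; simp)
  then obtain C where C: "C > 0" "\<And>y. norm (DF p0 (0, y)) \<le> C * norm y"
    using linear_bounded_pos by blast
  obtain r where r: "r > 0" "\<And>p1 p2. p1 \<in> ball p0 r \<Longrightarrow> p2 \<in> ball p0 r \<Longrightarrow>
      norm (F p2 - F p1 - DF p0 (p2 - p1)) \<le> 3 * (\<kappa> / 4) * norm (p2 - p1)"
    using linearization_error_near[OF der lin cont, of "\<kappa> / 4" p0] \<kappa>(1) by auto
  have "norm (fst p2 - fst p1) \<le> ((3 * \<kappa> + 4 * C) / \<kappa>) * norm (snd p2 - snd p1)"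
    if "p1 \<in> ball p0 r" "p2 \<in> ball p0 r" "F p1 = 0" "F p2 = 0" for p1 p2
  proof -
    obtain b1 y1 b2 y2 where p: "p1 = (b1, y1)" "p2 = (b2, y2)" by (cases p1, cases p2)
    have "norm (DF p0 (p2 - p1)) \<le> 3 * (\<kappa> / 4) * norm (p2 - p1)"
      using r(2)[of p1 p2] that by simp
    also have "\<dots> \<le> 3 * (\<kappa> / 4) * (norm (b2 - b1) + norm (y2 - y1))"
      using norm_Pair_le[of "b2 - b1" "y2 - y1"] \<kappa>(1) by (simp add: p)
    finally have small: "norm (DF p0 (p2 - p1)) \<le> 3 * (\<kappa> / 4) * (norm (b2 - b1) + norm (y2 - y1))" .
    have "DF p0 (p2 - p1) = A (b2 - b1) + DF p0 (0, y2 - y1)"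
      using linear_add[OF lin[of p0], of "(b2 - b1, 0)" "(0, y2 - y1)"] by (simp add: p A_def)
    then have "\<kappa> * norm (b2 - b1) \<le> norm (DF p0 (p2 - p1)) + C * norm (y2 - y1)"
      using \<kappa>(2)[of "b2 - b1"] C(2)[of "y2 - y1"]
        norm_triangle_ineq4[of "DF p0 (p2 - p1)" "DF p0 (0, y2 - y1)"] by (simp add: algebra_simps)
    with small have "\<kappa> * norm (b2 - b1) \<le> (3 * \<kappa> + 4 * C) * norm (y2 - y1)"
      by (simp add: algebra_simps)
    with \<kappa>(1) show ?thesis by (simp add: p pos_le_divide_eq mult.commute)
  qed
  from that[OF r(1) this] show ?thesis .
qed

lemma negligible_Lipschitz_image_lowdim:
  fixes g :: "'m::euclidean_space \<Rightarrow> 'k::euclidean_space"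
  assumes dim: "DIM('m) < DIM('k)"
    and L: "\<And>y1 y2. y1 \<in> S \<Longrightarrow> y2 \<in> S \<Longrightarrow> norm (g y1 - g y2) \<le> L * norm (y1 - y2)"
  shows "negligible (g ` S)"
proof -
  define S' where "S' = (\<lambda>y. (y, 0::real)) ` S"
  have "S' \<subseteq> {z. (0::'m, 1::real) \<bullet> z = 0}" by (auto simp: S'_def)
  moreover have "negligible {z. (0::'m, 1::real) \<bullet> z = 0}"
    by (rule negligible_hyperplane) (simp add: zero_prod_def)
  ultimately have "negligible S'" using negligible_subset by blast
  then have "negligible ((\<lambda>z. g (fst z)) ` S')"
  proof (rule negligible_locally_Lipschitz_image[rotated])
    show "DIM('m \<times> real) \<le> DIM('k)" using dim by simp
    fix z assume "z \<in> S'"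
    then show "\<exists>T B. open T \<and> z \<in> T \<and> (\<forall>y\<in>S' \<inter> T. norm (g (fst y) - g (fst z)) \<le> B * norm (y - z))"
      using L by (intro exI[of _ UNIV] exI[of _ L]) (auto simp: S'_def)
  qed
  moreover have "(\<lambda>z. g (fst z)) ` S' = g ` S" by (auto simp: S'_def image_image)
  ultimately show ?thesis by simp
qed

lemma negligible_fst_image_if_Lipschitz_over_snd:
  fixes W :: "('k::euclidean_space \<times> 'm::euclidean_space) set"
  assumes dim: "DIM('m) < DIM('k)"
    and L: "\<And>p1 p2. p1 \<in> W \<Longrightarrow> p2 \<in> W \<Longrightarrow> norm (fst p2 - fst p1) \<le> L * norm (snd p2 - snd p1)"
  shows "negligible (fst ` W)"
proof -
  define g where "g y = fst (SOME p. p \<in> W \<and> snd p = y)" for y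
  have g: "g (snd p) = fst p" if "p \<in> W" for p
  proof -
    define p' where "p' = (SOME p'. p' \<in> W \<and> snd p' = snd p)"
    have "\<exists>p'. p' \<in> W \<and> snd p' = snd p" using that by blast
    then have p': "p' \<in> W \<and> snd p' = snd p" unfolding p'_def by (rule someI_ex)
    then show ?thesis using L[of p' p] that by (simp add: g_def flip: p'_def)
  qed
  have "fst ` W = g ` (snd ` W)" by (force simp: g image_image)
  moreover have "negligible (g ` (snd ` W))"
    using dim L g by (intro negligible_Lipschitz_image_lowdim) (auto simp: norm_minus_commute)
  ultimately show ?thesis by simp
qed

lemma negligible_image_if_locally_negligible:
  fixes f :: "'a::euclidean_space \<Rightarrow> 'b::euclidean_space"
  assumes local: "\<And>p. p \<in> Z \<Longrightarrow> \<exists>r>0. negligible (f ` (Z \<inter> ball p r))"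
  shows "negligible (f ` Z)"
proof -
  obtain r where r: "\<And>p. p \<in> Z \<Longrightarrow> r p > 0 \<and> negligible (f ` (Z \<inter> ball p (r p)))"
    using local by metis
  obtain \<F> where \<F>: "\<F> \<subseteq> (\<lambda>p. ball p (r p)) ` Z" "countable \<F>" "\<Union>\<F> = \<Union>((\<lambda>p. ball p (r p)) ` Z)"
    using Lindelof[of "(\<lambda>p. ball p (r p)) ` Z"] by auto
  have "Z \<subseteq> \<Union>\<F>"
  proof
    fix p assume "p \<in> Z"
    then have "p \<in> ball p (r p)" using r by simp
    with \<open>p \<in> Z\<close> show "p \<in> \<Union>\<F>" unfolding \<F>(3) by blast
  qed
  then have "f ` Z = (\<Union>U\<in>\<F>. f ` (Z \<inter> U))" by auto
  moreover have "negligible (\<Union>U\<in>\<F>. f ` (Z \<inter> U))"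
  proof (intro negligible_countable_Union countable_image \<F>(2))
    fix S assume "S \<in> (\<lambda>U. f ` (Z \<inter> U)) ` \<F>"
    then obtain p where "p \<in> Z" "S = f ` (Z \<inter> ball p (r p))" using \<F>(1) by auto
    then show "negligible S" using r by simp
  qed
  ultimately show ?thesis by simp
qed

theorem negligible_projection_regular_zeros:
  fixes F :: "'k::euclidean_space \<times> 'm::euclidean_space \<Rightarrow> 'k"
  assumes dim: "DIM('m) < DIM('k)"
    and der: "\<And>p h. ((\<lambda>s. F (p + s *\<^sub>R h)) has_vector_derivative DF p h) (at 0)"
    and lin: "\<And>p. linear (DF p)" and cont: "\<And>h. continuous_on UNIV (\<lambda>p. DF p h)"
  shows "negligible {b. \<exists>y. F (b, y) = 0 \<and> inj (\<lambda>u. DF (b, y) (u, 0))}"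
proof -
  define Z where "Z = {p. F p = 0 \<and> inj (\<lambda>u. DF p (u, 0))}"
  have "negligible (fst ` Z)"
  proof (rule negligible_image_if_locally_negligible)
    fix p0 assume "p0 \<in> Z"
    then have "inj (\<lambda>u. DF p0 (u, 0))" by (simp add: Z_def)
    then obtain r L where "r > 0" and L: "\<And>p1 p2. p1 \<in> ball p0 r \<Longrightarrow> p2 \<in> ball p0 r \<Longrightarrow>
        F p1 = 0 \<Longrightarrow> F p2 = 0 \<Longrightarrow> norm (fst p2 - fst p1) \<le> L * norm (snd p2 - snd p1)"
      using zeros_Lipschitz_graph_near_regular_point[OF der lin cont] by blast
    moreover have "negligible (fst ` (Z \<inter> ball p0 r))"
      using dim L by (intro negligible_fst_image_if_Lipschitz_over_snd) (auto simp: Z_def)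
    ultimately show "\<exists>r>0. negligible (fst ` (Z \<inter> ball p0 r))" by blast
  qed
  moreover have "{b. \<exists>y. F (b, y) = 0 \<and> inj (\<lambda>u. DF (b, y) (u, 0))} = fst ` Z"
    by (force simp: Z_def)
  ultimately show ?thesis by simp
qed

section \<open>Null sets of finite products of Lebesgue measure\<close>

definition fun_of_vec :: "('k::finite \<Rightarrow> 'a) \<Rightarrow> real^'k \<Rightarrow> 'a \<Rightarrow> real" where
  "fun_of_vec \<sigma> b = (\<lambda>\<alpha>\<in>range \<sigma>. b $ (inv \<sigma> \<alpha>))"

lemma measurable_fun_of_vec: "fun_of_vec \<sigma> \<in> measurable lborel (PiM (range \<sigma>) (\<lambda>_. lborel))"
  unfolding fun_of_vec_def by (intro measurable_restrict) simp

interpretation product_lborel: product_sigma_finite "\<lambda>_::'a. lborel :: real measure"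
  by standard

lemma emeasure_lborel_vec_Pi:
  fixes A :: "'k::finite \<Rightarrow> real set"
  assumes A: "\<And>\<kappa>. A \<kappa> \<in> sets borel"
  shows "emeasure lborel {x::real^'k. \<forall>\<kappa>. x $ \<kappa> \<in> A \<kappa>} = (\<Prod>\<kappa>\<in>UNIV. emeasure lborel (A \<kappa>))"
proof -
  define ax where "ax \<kappa> = (axis \<kappa> 1 :: real^'k)" for \<kappa>
  have inj_ax: "inj ax" by (auto simp: ax_def inj_def axis_eq_axis)
  have Basis: "(Basis :: (real^'k) set) = range ax" by (auto simp: Basis_vec_def ax_def)
  define f :: "real^'k \<Rightarrow> real \<Rightarrow> ennreal" where "f b = indicator (A (inv ax b))" for b
  have f_ax: "f (ax \<kappa>) = indicator (A \<kappa>)" for \<kappa> by (simp add: f_def inv_f_f[OF inj_ax])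
  have "(\<lambda>x. \<Prod>b\<in>Basis. f b (x \<bullet> b)) = indicator {x. \<forall>\<kappa>. x $ \<kappa> \<in> A \<kappa>}"
  proof
    fix x :: "real^'k"
    have "(\<Prod>b\<in>Basis. f b (x \<bullet> b)) = (\<Prod>\<kappa>\<in>UNIV. f (ax \<kappa>) (x \<bullet> ax \<kappa>))"
      unfolding Basis using inj_ax by (simp add: prod.reindex)
    also have "\<dots> = (\<Prod>\<kappa>\<in>UNIV. indicator (A \<kappa>) (x $ \<kappa>))"
      by (simp add: f_ax, simp add: ax_def cart_eq_inner_axis[symmetric])
    also have "\<dots> = indicator {x. \<forall>\<kappa>. x $ \<kappa> \<in> A \<kappa>} x"
      by (auto simp: indicator_def prod_zero_iff)
    finally show "(\<Prod>b\<in>Basis. f b (x \<bullet> b)) = indicator {x. \<forall>\<kappa>. x $ \<kappa> \<in> A \<kappa>} x" .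
  qed
  moreover have "{x::real^'k. \<forall>\<kappa>. x $ \<kappa> \<in> A \<kappa>} \<in> sets lborel"
  proof -
    have "{x::real^'k. \<forall>\<kappa>. x $ \<kappa> \<in> A \<kappa>} = (\<Inter>\<kappa>. (\<lambda>x. x $ \<kappa>) -` A \<kappa> \<inter> space lborel)"
      by auto
    also have "\<dots> \<in> sets lborel" using A by measurable
    finally show ?thesis .
  qed
  ultimately have "emeasure lborel {x::real^'k. \<forall>\<kappa>. x $ \<kappa> \<in> A \<kappa>} = (\<integral>\<^sup>+x. (\<Prod>b\<in>Basis. f b (x \<bullet> b)) \<partial>lborel)"
    by (simp add: nn_integral_indicator)
  also have "\<dots> = (\<Prod>b\<in>Basis. (\<integral>\<^sup>+x. f b x \<partial>lborel))"
    by (rule nn_integral_lborel_prod) (auto simp: Basis f_ax intro!: borel_measurable_indicator A)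
  also have "\<dots> = (\<Prod>\<kappa>\<in>UNIV. emeasure lborel (A \<kappa>))"
    unfolding Basis using inj_ax A by (simp add: prod.reindex f_ax)
  finally show ?thesis .
qed

lemma distr_lborel_fun_of_vec:
  fixes \<sigma> :: "'k::finite \<Rightarrow> 'a"
  assumes inj: "inj \<sigma>"
  shows "distr lborel (PiM (range \<sigma>) (\<lambda>_. lborel)) (fun_of_vec \<sigma>) = PiM (range \<sigma>) (\<lambda>_. lborel)"
proof (rule product_lborel.PiM_eqI)
  fix A assume A: "\<And>i. i \<in> range \<sigma> \<Longrightarrow> A i \<in> sets (lborel::real measure)"
  have "fun_of_vec \<sigma> -` Pi\<^sub>E (range \<sigma>) A = {x. \<forall>\<kappa>. x $ \<kappa> \<in> A (\<sigma> \<kappa>)}"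
    by (auto simp: fun_of_vec_def PiE_def Pi_def extensional_def inv_f_f[OF inj])
      (metis inj inv_f_f rangeI)
  then have "emeasure (distr lborel (PiM (range \<sigma>) (\<lambda>_. lborel)) (fun_of_vec \<sigma>)) (Pi\<^sub>E (range \<sigma>) A)
      = emeasure lborel {x. \<forall>\<kappa>. x $ \<kappa> \<in> A (\<sigma> \<kappa>)}"
    by (subst emeasure_distr[OF measurable_fun_of_vec]) (auto intro!: sets_PiM_I_finite A)
  also have "\<dots> = (\<Prod>\<kappa>\<in>UNIV. emeasure lborel (A (\<sigma> \<kappa>)))"
    using A by (intro emeasure_lborel_vec_Pi) simp
  also have "\<dots> = (\<Prod>\<alpha>\<in>range \<sigma>. emeasure lborel (A \<alpha>))"
    using inj by (simp add: prod.reindex)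
  finally show "emeasure (distr lborel (PiM (range \<sigma>) (\<lambda>_. lborel)) (fun_of_vec \<sigma>)) (Pi\<^sub>E (range \<sigma>) A)
      = (\<Prod>\<alpha>\<in>range \<sigma>. emeasure lborel (A \<alpha>))" .
qed simp_all

lemma emeasure_PiM_eq_0_if_fibers_null:
  fixes I B :: "'a set"
  assumes fin: "finite I" and BI: "B \<subseteq> I" and E: "E \<in> sets (PiM I (\<lambda>_. lborel::real measure))"
    and fib: "\<And>cA. cA \<in> space (PiM (I - B) (\<lambda>_. lborel)) \<Longrightarrow>
       emeasure (PiM B (\<lambda>_. lborel)) {cB \<in> space (PiM B (\<lambda>_. lborel)). merge (I - B) B (cA, cB) \<in> E} = 0"
  shows "emeasure (PiM I (\<lambda>_. lborel::real measure)) E = 0"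
proof -
  let ?M1 = "PiM (I - B) (\<lambda>_. lborel::real measure)" and ?M2 = "PiM B (\<lambda>_. lborel::real measure)"
  have IU: "I = (I - B) \<union> B" using BI by auto
  have finB: "finite B" using fin BI finite_subset by blast
  interpret M2: sigma_finite_measure ?M2 by (rule product_lborel.sigma_finite[OF finB])
  have dm: "distr (?M1 \<Otimes>\<^sub>M ?M2) (PiM I (\<lambda>_. lborel)) (merge (I - B) B) = PiM I (\<lambda>_. lborel)"
    using product_lborel.distr_merge[of "I - B" B] fin finB IU by auto
  have mm: "merge (I - B) B \<in> measurable (?M1 \<Otimes>\<^sub>M ?M2) (PiM I (\<lambda>_. lborel))"
    using measurable_merge[of "I - B" B "\<lambda>_. lborel"] IU by simp
  have X: "merge (I - B) B -` E \<inter> space (?M1 \<Otimes>\<^sub>M ?M2) \<in> sets (?M1 \<Otimes>\<^sub>M ?M2)"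
    using mm E by (rule measurable_sets)
  have "emeasure (PiM I (\<lambda>_. lborel)) E = emeasure (distr (?M1 \<Otimes>\<^sub>M ?M2) (PiM I (\<lambda>_. lborel)) (merge (I - B) B)) E"
    by (simp add: dm)
  also have "\<dots> = emeasure (?M1 \<Otimes>\<^sub>M ?M2) (merge (I - B) B -` E \<inter> space (?M1 \<Otimes>\<^sub>M ?M2))"
    by (rule emeasure_distr[OF mm E])
  also have "\<dots> = (\<integral>\<^sup>+cA. emeasure ?M2 (Pair cA -` (merge (I - B) B -` E \<inter> space (?M1 \<Otimes>\<^sub>M ?M2))) \<partial>?M1)"
    by (rule M2.emeasure_pair_measure_alt[OF X])
  also have "\<dots> = (\<integral>\<^sup>+cA. 0 \<partial>?M1)"
  proof (rule nn_integral_cong)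
    fix cA assume cA: "cA \<in> space ?M1"
    have "Pair cA -` (merge (I - B) B -` E \<inter> space (?M1 \<Otimes>\<^sub>M ?M2))
          = {cB \<in> space ?M2. merge (I - B) B (cA, cB) \<in> E}"
      using cA by (auto simp: space_pair_measure)
    then show "emeasure ?M2 (Pair cA -` (merge (I - B) B -` E \<inter> space (?M1 \<Otimes>\<^sub>M ?M2))) = 0"
      using fib[OF cA] by simp
  qed
  finally show ?thesis by simp
qed

lemma emeasure_lborel_eq_0_if_negligible:
  fixes S :: "'a::euclidean_space set"
  assumes "S \<in> sets lborel" "negligible S"
  shows "emeasure lborel S = 0"
  using assms null_sets_completion_iff[of S lborel] negligible_iff_null_sets by auto

lemma borel_measurable_ident_PiM_lborel:
  "(\<lambda>c::'a::countable \<Rightarrow> real. c) \<in> borel_measurable (PiM I (\<lambda>_. lborel :: real measure))"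
proof (rule measurable_coordinatewise_then_product)
  fix \<alpha> :: 'a
  show "(\<lambda>c. c \<alpha>) \<in> borel_measurable (PiM I (\<lambda>_. lborel :: real measure))"
  proof (cases "\<alpha> \<in> I")
    case True
    then show ?thesis using measurable_component_singleton[OF True, of "\<lambda>_. lborel"] by simp
  next
    case False
    have "(\<lambda>c. c \<alpha>) \<in> borel_measurable (PiM I (\<lambda>_. lborel :: real measure))
        \<longleftrightarrow> (\<lambda>c. undefined::real) \<in> borel_measurable (PiM I (\<lambda>_. lborel :: real measure))"
      by (rule measurable_cong) (use False in \<open>auto simp: space_PiM PiE_def extensional_def\<close>)
    then show ?thesis by simp
  qed
qed

lemma compact_PiE_atLeastAtMost: "compact (PiE I (\<lambda>_. {a..b::real}))"
proof -
  define X where "X i = (if i \<in> I then {a..b} else {undefined})" for i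
  have "PiE I (\<lambda>_. {a..b}) = PiE UNIV X" by (auto simp: X_def PiE_def Pi_def extensional_def)
  moreover have "compactin (product_topology (\<lambda>_. euclidean) UNIV) (PiE UNIV X)"
    by (subst compactin_PiE) (auto simp: X_def)
  ultimately show ?thesis by (simp add: euclidean_product_topology compactin_euclidean_iff)
qed

definition unit_coeffs :: "'a \<Rightarrow> 'a \<Rightarrow> real" where
  "unit_coeffs \<alpha> = (\<lambda>\<beta>. if \<beta> = \<alpha> then 1 else 0)"

lemma unit_coeffs_mult: "unit_coeffs \<alpha> \<beta> * m = (if \<beta> = \<alpha> then m else 0)"
  by (simp add: unit_coeffs_def)

definition extend_coeffs :: "('k::finite \<Rightarrow> 'a) \<Rightarrow> real^'k \<Rightarrow> 'a \<Rightarrow> real" where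
  "extend_coeffs \<sigma> u = (\<lambda>\<alpha>. if \<alpha> \<in> range \<sigma> then u $ (inv \<sigma> \<alpha>) else 0)"

lemma extend_coeffs_lincomb:
  "extend_coeffs \<sigma> (a *\<^sub>R u1 + b *\<^sub>R u2) = (\<lambda>\<alpha>. a * extend_coeffs \<sigma> u1 \<alpha> + b * extend_coeffs \<sigma> u2 \<alpha>)"
  by (auto simp: extend_coeffs_def)

lemma extend_coeffs_axis: "inj \<sigma> \<Longrightarrow> extend_coeffs \<sigma> (axis \<kappa> 1) = unit_coeffs (\<sigma> \<kappa>)"
  by (rule ext) (auto simp: extend_coeffs_def unit_coeffs_def axis_def inv_f_f)

lemma merge_fun_of_vec_line:
  assumes "A \<inter> range \<sigma> = {}"
  shows "merge A (range \<sigma>) (cA, fun_of_vec \<sigma> (b + s *\<^sub>R h))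
    = (\<lambda>\<alpha>. merge A (range \<sigma>) (cA, fun_of_vec \<sigma> b) \<alpha> + s * extend_coeffs \<sigma> h \<alpha>)"
  using assms by (auto simp: merge_def fun_of_vec_def extend_coeffs_def fun_eq_iff)

lemma continuous_on_merge_fun_of_vec:
  "continuous_on S (\<lambda>p. merge A (range \<sigma>) (cA, fun_of_vec \<sigma> (fst p :: real^'k::finite)))"
proof (rule continuous_on_coordinatewise_then_product)
  fix \<alpha>
  show "continuous_on S (\<lambda>p. merge A (range \<sigma>) (cA, fun_of_vec \<sigma> (fst p)) \<alpha>)"
    by (cases "\<alpha> \<in> A"; cases "\<alpha> \<in> range \<sigma>")
      (simp_all add: merge_def fun_of_vec_def continuous_on_component continuous_on_fst)
qed

section \<open>The perturbed family and its variational equations\<close>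

lemma finite_mindex: "finite (mindex D :: ('d::finite \<Rightarrow> nat) set)"
proof (rule finite_subset)
  show "mindex D \<subseteq> {\<alpha>::'d \<Rightarrow> nat. \<forall>i. \<alpha> i \<in> {..2 * D}}"
  proof
    fix \<alpha> :: "'d \<Rightarrow> nat" assume "\<alpha> \<in> mindex D"
    then have deg: "(\<Sum>i\<in>UNIV. \<alpha> i) \<le> 2 * D - 1" by (simp add: mindex_def mdeg_def)
    have "\<alpha> i \<le> (\<Sum>i\<in>UNIV. \<alpha> i)" for i by (rule member_le_sum) auto
    then have "\<alpha> i \<le> 2 * D" for i using deg by (meson diff_le_self order_trans)
    then show "\<alpha> \<in> {\<alpha>. \<forall>i. \<alpha> i \<in> {..2 * D}}" by auto
  qed
  show "finite {\<alpha>::'d \<Rightarrow> nat. \<forall>i. \<alpha> i \<in> {..2 * D}}"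
    using finite_PiE[of UNIV "\<lambda>_::'d. {..2 * D}"] by (simp add: PiE_def Pi_def extensional_def)
qed

lemma inj_on_funpow_orbit:
  assumes inj: "inj f" and not_fixed: "f x \<noteq> x"
    and no_per: "\<And>y k. 1 \<le> k \<Longrightarrow> k < P \<Longrightarrow> (f ^^ k) y = y \<Longrightarrow> f y = y" and KP: "K \<le> P"
  shows "inj_on (\<lambda>m. (f ^^ m) x) {..<K}"
proof -
  have False if ab: "a < b" "b < K" and eq: "(f ^^ a) x = (f ^^ b) x" for a b
  proof -
    have "(f ^^ (b - a)) ((f ^^ a) x) = (f ^^ (b - a + a)) x" by (simp add: funpow_add)
    also have "\<dots> = (f ^^ a) x" using ab eq by simp
    finally have "(f ^^ (b - a)) ((f ^^ a) x) = (f ^^ a) x" .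
    then have "f ((f ^^ a) x) = (f ^^ a) x" using no_per[of "b - a"] ab KP by simp
    then have "(f ^^ a) (f x) = (f ^^ a) x" by (simp add: funpow_swap1)
    then show False using inj_fn[OF inj, of a] not_fixed by (simp add: inj_def)
  qed
  then show ?thesis by (intro inj_onI) (metis lessThan_iff linorder_neqE_nat)
qed

locale perturbed_family =
  fixes \<phi> :: "real^'d::finite \<Rightarrow> real^'d" and i1 :: 'd and D :: nat
  assumes phi_C2: "Ck 2 \<phi>"
begin

definition e1 :: "real^'d" where "e1 = axis i1 1"

definition pert_poly :: "(('d \<Rightarrow> nat) \<Rightarrow> real) \<Rightarrow> real^'d \<Rightarrow> real" where
  "pert_poly c z = (\<Sum>\<alpha>\<in>mindex D. c \<alpha> * monomial \<alpha> z)"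

definition pert_poly_deriv :: "(('d \<Rightarrow> nat) \<Rightarrow> real) \<Rightarrow> real^'d \<Rightarrow> real^'d \<Rightarrow> real" where
  "pert_poly_deriv c z w = (\<Sum>\<alpha>\<in>mindex D. c \<alpha> * deriv1 (monomial \<alpha>) z w)"

definition pert_poly_deriv2 ::
  "(('d \<Rightarrow> nat) \<Rightarrow> real) \<Rightarrow> real^'d \<Rightarrow> real^'d \<Rightarrow> real^'d \<Rightarrow> real" where
  "pert_poly_deriv2 c z a w = (\<Sum>\<alpha>\<in>mindex D. c \<alpha> * deriv2 (monomial \<alpha>) z a w)"

definition pert_deriv :: "(('d \<Rightarrow> nat) \<Rightarrow> real) \<Rightarrow> real^'d \<Rightarrow> real^'d \<Rightarrow> real^'d" where
  "pert_deriv c z w = deriv1 \<phi> z w + pert_poly_deriv c z w *\<^sub>R e1"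

definition pert_deriv2 ::
  "(('d \<Rightarrow> nat) \<Rightarrow> real) \<Rightarrow> real^'d \<Rightarrow> real^'d \<Rightarrow> real^'d \<Rightarrow> real^'d" where
  "pert_deriv2 c z a w = deriv2 \<phi> z a w + pert_poly_deriv2 c z a w *\<^sub>R e1"

definition orbit :: "(('d \<Rightarrow> nat) \<Rightarrow> real) \<Rightarrow> real^'d \<Rightarrow> nat \<Rightarrow> real^'d" where
  "orbit c x k = (perturb i1 D \<phi> c ^^ k) x"

primrec tangent :: "(('d \<Rightarrow> nat) \<Rightarrow> real) \<Rightarrow> real^'d \<Rightarrow> real^'d \<Rightarrow> nat \<Rightarrow> real^'d" where
  "tangent c x v 0 = v"
| "tangent c x v (Suc k) = pert_deriv c (orbit c x k) (tangent c x v k)"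

text \<open>The first variations of \<open>orbit\<close> and \<open>tangent\<close> along the line
  \<open>s \<mapsto> (c + s \<gamma>, x + s \<xi>, v + s \<nu>)\<close>, obtained by differentiating their recursions.\<close>

primrec orbit_var ::
  "(('d \<Rightarrow> nat) \<Rightarrow> real) \<Rightarrow> real^'d \<Rightarrow> (('d \<Rightarrow> nat) \<Rightarrow> real) \<Rightarrow> real^'d \<Rightarrow> nat \<Rightarrow> real^'d" where
  "orbit_var c x \<gamma> \<xi> 0 = \<xi>"
| "orbit_var c x \<gamma> \<xi> (Suc k) =
     pert_deriv c (orbit c x k) (orbit_var c x \<gamma> \<xi> k) + pert_poly \<gamma> (orbit c x k) *\<^sub>R e1"

primrec tangent_var :: "(('d \<Rightarrow> nat) \<Rightarrow> real) \<Rightarrow> real^'d \<Rightarrow> real^'d \<Rightarrow> (('d \<Rightarrow> nat) \<Rightarrow> real) \<Rightarrow>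
    real^'d \<Rightarrow> real^'d \<Rightarrow> nat \<Rightarrow> real^'d" where
  "tangent_var c x v \<gamma> \<xi> \<nu> 0 = \<nu>"
| "tangent_var c x v \<gamma> \<xi> \<nu> (Suc k) =
     pert_deriv2 c (orbit c x k) (orbit_var c x \<gamma> \<xi> k) (tangent c x v k)
     + pert_deriv c (orbit c x k) (tangent_var c x v \<gamma> \<xi> \<nu> k)
     + pert_poly_deriv \<gamma> (orbit c x k) (tangent c x v k) *\<^sub>R e1"

lemma perturb_eq: "perturb i1 D \<phi> c z = \<phi> z + pert_poly c z *\<^sub>R e1"
  by (simp add: perturb_def pert_poly_def e1_def)

lemma orbit_0 [simp]: "orbit c x 0 = x"
  and orbit_Suc: "orbit c x (Suc k) = perturb i1 D \<phi> c (orbit c x k)"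
  by (simp_all add: orbit_def)

lemma phi_Ck_Suc_Suc: "Ck (Suc (Suc 0)) \<phi>" and phi_Ck_Suc: "Ck (Suc 0) \<phi>"
  using phi_C2 Ck_mono[of 2 \<phi>] by (auto simp: numeral_eq_Suc)

lemma has_derivative_pert_poly: "(pert_poly c has_derivative pert_poly_deriv c z) (at z)"
  unfolding pert_poly_def[abs_def] pert_poly_deriv_def[abs_def]
  by (intro has_derivative_sum has_derivative_mult_right has_derivative_deriv1[OF Ck_monomial])

lemma has_derivative_perturb: "(perturb i1 D \<phi> c has_derivative pert_deriv c z) (at z)"
  unfolding perturb_eq[abs_def] pert_deriv_def[abs_def]
  by (intro has_derivative_add has_derivative_scaleR_left has_derivative_deriv1[OF phi_Ck_Suc]
      has_derivative_pert_poly)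

lemma has_derivative_funpow_perturb:
  "((perturb i1 D \<phi> c ^^ k) has_derivative (\<lambda>v. tangent c x v k)) (at x)"
proof (induction k)
  case 0 then show ?case by (simp add: has_derivative_ident id_def[symmetric])
next
  case (Suc k)
  have "((perturb i1 D \<phi> c \<circ> (perturb i1 D \<phi> c ^^ k)) has_derivative
          (pert_deriv c (orbit c x k) \<circ> (\<lambda>v. tangent c x v k))) (at x)"
    by (rule diff_chain_at[OF Suc]) (simp add: orbit_def has_derivative_perturb)
  then show ?case by (simp add: o_def)
qed

lemma delay_immersive_at_iff:
  "delay_immersive_at i1 D (perturb i1 D \<phi> c) x \<longleftrightarrow>
     (\<forall>v. v \<noteq> 0 \<longrightarrow> (\<exists>j<D. tangent c x v j $ i1 \<noteq> 0))"
proof -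
  have "((\<lambda>y. (perturb i1 D \<phi> c ^^ j) y $ i1) has_derivative (\<lambda>v. tangent c x v j $ i1)) (at x)"
    for j
    by (rule bounded_linear.has_derivative[OF bounded_linear_vec_nth has_derivative_funpow_perturb])
  then show ?thesis
    unfolding delay_immersive_at_def using frechet_derivative_at differentiable_def by metis
qed

lemma pert_poly_deriv_add: "pert_poly_deriv c z (a + b) = pert_poly_deriv c z a + pert_poly_deriv c z b"
  and pert_poly_deriv_scale: "pert_poly_deriv c z (r *\<^sub>R a) = r * pert_poly_deriv c z a"
  by (auto simp: pert_poly_deriv_def deriv1_add deriv1_scale sum.distrib distrib_left
      sum_distrib_left ac_simps)

lemma pert_deriv_add: "pert_deriv c z (a + b) = pert_deriv c z a + pert_deriv c z b"
  and pert_deriv_scale: "pert_deriv c z (r *\<^sub>R a) = r *\<^sub>R pert_deriv c z a"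
  and pert_deriv_zero: "pert_deriv c z 0 = 0"
  using pert_poly_deriv_scale[of c z 0 0]
  by (auto simp: pert_deriv_def deriv1_add deriv1_scale deriv1_zero pert_poly_deriv_add
      pert_poly_deriv_scale scaleR_add_left algebra_simps)

lemma pert_deriv_sum: "pert_deriv c z (\<Sum>j\<in>S. a j) = (\<Sum>j\<in>S. pert_deriv c z (a j))"
  by (induction S rule: infinite_finite_induct) (auto simp: pert_deriv_add pert_deriv_zero)

lemma pert_poly_deriv2_add:
    "pert_poly_deriv2 c z (a + b) w = pert_poly_deriv2 c z a w + pert_poly_deriv2 c z b w"
  and pert_poly_deriv2_scale: "pert_poly_deriv2 c z (r *\<^sub>R a) w = r * pert_poly_deriv2 c z a w"
  by (auto simp: pert_poly_deriv2_def deriv2_add deriv2_scale sum.distrib distrib_left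
      sum_distrib_left ac_simps)

lemma pert_deriv2_add: "pert_deriv2 c z (a + b) w = pert_deriv2 c z a w + pert_deriv2 c z b w"
  and pert_deriv2_scale: "pert_deriv2 c z (r *\<^sub>R a) w = r *\<^sub>R pert_deriv2 c z a w"
  and pert_deriv2_zero: "pert_deriv2 c z 0 w = 0"
  using pert_poly_deriv2_scale[of c z 0 0]
  by (auto simp: pert_deriv2_def deriv2_add deriv2_scale deriv2_zero pert_poly_deriv2_add
      pert_poly_deriv2_scale scaleR_add_left algebra_simps)

lemma pert_deriv2_sum: "pert_deriv2 c z (\<Sum>j\<in>S. a j) w = (\<Sum>j\<in>S. pert_deriv2 c z (a j) w)"
  by (induction S rule: infinite_finite_induct) (auto simp: pert_deriv2_add pert_deriv2_zero)

lemma pert_poly_lincomb: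
  "pert_poly (\<lambda>\<alpha>. a * g1 \<alpha> + b * g2 \<alpha>) z = a * pert_poly g1 z + b * pert_poly g2 z"
  by (simp add: pert_poly_def sum.distrib sum_distrib_left algebra_simps)

lemma pert_poly_deriv_lincomb:
  "pert_poly_deriv (\<lambda>\<alpha>. a * g1 \<alpha> + b * g2 \<alpha>) z w = a * pert_poly_deriv g1 z w + b * pert_poly_deriv g2 z w"
  by (simp add: pert_poly_deriv_def sum.distrib sum_distrib_left algebra_simps)

lemma orbit_var_lincomb:
  "orbit_var c x (\<lambda>\<alpha>. a * g1 \<alpha> + b * g2 \<alpha>) (a *\<^sub>R \<xi>1 + b *\<^sub>R \<xi>2) k
     = a *\<^sub>R orbit_var c x g1 \<xi>1 k + b *\<^sub>R orbit_var c x g2 \<xi>2 k"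
  by (induction k) (simp_all add: pert_poly_lincomb pert_deriv_add pert_deriv_scale algebra_simps)

lemma tangent_var_lincomb:
  "tangent_var c x v (\<lambda>\<alpha>. a * g1 \<alpha> + b * g2 \<alpha>) (a *\<^sub>R \<xi>1 + b *\<^sub>R \<xi>2) (a *\<^sub>R \<nu>1 + b *\<^sub>R \<nu>2) k
     = a *\<^sub>R tangent_var c x v g1 \<xi>1 \<nu>1 k + b *\<^sub>R tangent_var c x v g2 \<xi>2 \<nu>2 k"
  by (induction k) (simp_all add: orbit_var_lincomb pert_poly_deriv_lincomb pert_deriv2_add
      pert_deriv2_scale pert_deriv_add pert_deriv_scale algebra_simps)

lemma pert_poly_unit_coeffs: "\<alpha> \<in> mindex D \<Longrightarrow> pert_poly (unit_coeffs \<alpha>) z = monomial \<alpha> z"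
  by (simp add: pert_poly_def unit_coeffs_mult finite_mindex)

lemma pert_poly_deriv_unit_coeffs:
  "\<alpha> \<in> mindex D \<Longrightarrow> pert_poly_deriv (unit_coeffs \<alpha>) z w = deriv1 (monomial \<alpha>) z w"
  by (simp add: pert_poly_deriv_def unit_coeffs_mult finite_mindex)

lemma pert_poly_expand: "pert_poly \<gamma> z = (\<Sum>\<alpha>\<in>mindex D. \<gamma> \<alpha> * pert_poly (unit_coeffs \<alpha>) z)"
  unfolding pert_poly_def[of \<gamma>] by (rule sum.cong) (simp_all add: pert_poly_unit_coeffs)

lemma pert_poly_deriv_expand:
  "pert_poly_deriv \<gamma> z w = (\<Sum>\<alpha>\<in>mindex D. \<gamma> \<alpha> * pert_poly_deriv (unit_coeffs \<alpha>) z w)"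
  unfolding pert_poly_deriv_def[of \<gamma>] by (rule sum.cong) (simp_all add: pert_poly_deriv_unit_coeffs)

lemma orbit_var_param_expand:
  "orbit_var c x \<gamma> 0 k = (\<Sum>\<alpha>\<in>mindex D. \<gamma> \<alpha> *\<^sub>R orbit_var c x (unit_coeffs \<alpha>) 0 k)"
proof (induction k)
  case (Suc k)
  have "pert_poly \<gamma> z *\<^sub>R e1 = (\<Sum>\<alpha>\<in>mindex D. \<gamma> \<alpha> *\<^sub>R (pert_poly (unit_coeffs \<alpha>) z *\<^sub>R e1))" for z
    by (subst pert_poly_expand) (simp add: scaleR_sum_left)
  then show ?case by (simp add: Suc pert_deriv_sum pert_deriv_scale sum.distrib[symmetric] scaleR_add_right)
qed simp

lemma tangent_var_param_expand:
  "tangent_var c x v \<gamma> 0 0 k = (\<Sum>\<alpha>\<in>mindex D. \<gamma> \<alpha> *\<^sub>R tangent_var c x v (unit_coeffs \<alpha>) 0 0 k)"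
proof (induction k)
  case (Suc k)
  have "pert_poly_deriv \<gamma> z w *\<^sub>R e1
          = (\<Sum>\<alpha>\<in>mindex D. \<gamma> \<alpha> *\<^sub>R (pert_poly_deriv (unit_coeffs \<alpha>) z w *\<^sub>R e1))" for z w
    by (subst pert_poly_deriv_expand) (simp add: scaleR_sum_left)
  then show ?case
    by (simp add: Suc pert_deriv_sum pert_deriv_scale orbit_var_param_expand[of c x \<gamma>]
        pert_deriv2_sum pert_deriv2_scale sum.distrib[symmetric] scaleR_add_right)
qed simp

lemma has_vector_derivative_affine_coeffs:
  "((\<lambda>s. c \<alpha> + s * \<gamma> \<alpha>) has_vector_derivative \<gamma> \<alpha>) (at t)"
  using has_vector_derivative_add[OF has_vector_derivative_const
      has_vector_derivative_mult_left[OF has_vector_derivative_id, of "\<gamma> \<alpha>"]] by simp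

lemma has_vector_derivative_pert_poly:
  assumes Z: "(Z has_vector_derivative Z') (at t)"
  shows "((\<lambda>s. pert_poly (\<lambda>\<alpha>. c \<alpha> + s * \<gamma> \<alpha>) (Z s)) has_vector_derivative
           (pert_poly \<gamma> (Z t) + pert_poly_deriv (\<lambda>\<alpha>. c \<alpha> + t * \<gamma> \<alpha>) (Z t) Z')) (at t)"
proof -
  have "((\<lambda>s. \<Sum>\<alpha>\<in>mindex D. (c \<alpha> + s * \<gamma> \<alpha>) * monomial \<alpha> (Z s)) has_vector_derivative
        (\<Sum>\<alpha>\<in>mindex D. (c \<alpha> + t * \<gamma> \<alpha>) * deriv1 (monomial \<alpha>) (Z t) Z'
                       + \<gamma> \<alpha> * monomial \<alpha> (Z t))) (at t)"
    by (intro has_vector_derivative_sum has_vector_derivative_mult has_vector_derivative_affine_coeffs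
        has_vector_derivative_chain[OF Z] has_derivative_deriv1[OF Ck_monomial])
  then show ?thesis by (simp add: pert_poly_def pert_poly_deriv_def sum.distrib add.commute)
qed

lemma has_vector_derivative_pert_poly_deriv:
  assumes Z: "(Z has_vector_derivative Z') (at t)" and W: "(W has_vector_derivative W') (at t)"
  shows "((\<lambda>s. pert_poly_deriv (\<lambda>\<alpha>. c \<alpha> + s * \<gamma> \<alpha>) (Z s) (W s)) has_vector_derivative
           (pert_poly_deriv \<gamma> (Z t) (W t) + pert_poly_deriv2 (\<lambda>\<alpha>. c \<alpha> + t * \<gamma> \<alpha>) (Z t) Z' (W t)
             + pert_poly_deriv (\<lambda>\<alpha>. c \<alpha> + t * \<gamma> \<alpha>) (Z t) W')) (at t)"
proof -
  have "((\<lambda>s. \<Sum>\<alpha>\<in>mindex D. (c \<alpha> + s * \<gamma> \<alpha>) * deriv1 (monomial \<alpha>) (Z s) (W s))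
         has_vector_derivative
        (\<Sum>\<alpha>\<in>mindex D. (c \<alpha> + t * \<gamma> \<alpha>) *
            (deriv2 (monomial \<alpha>) (Z t) Z' (W t) + deriv1 (monomial \<alpha>) (Z t) W')
          + \<gamma> \<alpha> * deriv1 (monomial \<alpha>) (Z t) (W t))) (at t)"
    by (intro has_vector_derivative_sum has_vector_derivative_mult has_vector_derivative_affine_coeffs
        has_vector_derivative_deriv1[OF Ck_monomial Z W])
  then show ?thesis
    by (simp add: pert_poly_deriv_def pert_poly_deriv2_def sum.distrib distrib_left ac_simps)
qed

lemma has_vector_derivative_perturb:
  assumes Z: "(Z has_vector_derivative Z') (at t)"
  shows "((\<lambda>s. perturb i1 D \<phi> (\<lambda>\<alpha>. c \<alpha> + s * \<gamma> \<alpha>) (Z s)) has_vector_derivative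
           (pert_deriv (\<lambda>\<alpha>. c \<alpha> + t * \<gamma> \<alpha>) (Z t) Z' + pert_poly \<gamma> (Z t) *\<^sub>R e1)) (at t)"
proof -
  have "((\<lambda>s. \<phi> (Z s) + pert_poly (\<lambda>\<alpha>. c \<alpha> + s * \<gamma> \<alpha>) (Z s) *\<^sub>R e1) has_vector_derivative
          deriv1 \<phi> (Z t) Z'
          + (pert_poly \<gamma> (Z t) + pert_poly_deriv (\<lambda>\<alpha>. c \<alpha> + t * \<gamma> \<alpha>) (Z t) Z') *\<^sub>R e1) (at t)"
    using has_vector_derivative_scaleR[OF has_vector_derivative_pert_poly[OF Z, of c \<gamma>,
          folded has_real_derivative_iff_has_vector_derivative] has_vector_derivative_const[of e1]]
    by (intro has_vector_derivative_add has_vector_derivative_chain[OF Z]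
        has_derivative_deriv1[OF phi_Ck_Suc]) simp
  then show ?thesis by (simp add: perturb_eq pert_deriv_def scaleR_add_left algebra_simps)
qed

lemma has_vector_derivative_pert_deriv:
  assumes Z: "(Z has_vector_derivative Z') (at t)" and W: "(W has_vector_derivative W') (at t)"
  shows "((\<lambda>s. pert_deriv (\<lambda>\<alpha>. c \<alpha> + s * \<gamma> \<alpha>) (Z s) (W s)) has_vector_derivative
           (pert_deriv2 (\<lambda>\<alpha>. c \<alpha> + t * \<gamma> \<alpha>) (Z t) Z' (W t)
            + pert_deriv (\<lambda>\<alpha>. c \<alpha> + t * \<gamma> \<alpha>) (Z t) W'
            + pert_poly_deriv \<gamma> (Z t) (W t) *\<^sub>R e1)) (at t)"
proof -
  have "((\<lambda>s. deriv1 \<phi> (Z s) (W s) + pert_poly_deriv (\<lambda>\<alpha>. c \<alpha> + s * \<gamma> \<alpha>) (Z s) (W s) *\<^sub>R e1)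
         has_vector_derivative
          (deriv2 \<phi> (Z t) Z' (W t) + deriv1 \<phi> (Z t) W')
          + (pert_poly_deriv \<gamma> (Z t) (W t) + pert_poly_deriv2 (\<lambda>\<alpha>. c \<alpha> + t * \<gamma> \<alpha>) (Z t) Z' (W t)
             + pert_poly_deriv (\<lambda>\<alpha>. c \<alpha> + t * \<gamma> \<alpha>) (Z t) W') *\<^sub>R e1) (at t)"
    using has_vector_derivative_scaleR[OF has_vector_derivative_pert_poly_deriv[OF Z W, of c \<gamma>,
          folded has_real_derivative_iff_has_vector_derivative] has_vector_derivative_const[of e1]]
    by (intro has_vector_derivative_add has_vector_derivative_deriv1[OF phi_Ck_Suc_Suc Z W]) simp
  then show ?thesis by (simp add: pert_deriv_def pert_deriv2_def scaleR_add_left algebra_simps)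
qed

lemma has_vector_derivative_orbit_tangent:
  "((\<lambda>s. orbit (\<lambda>\<alpha>. c \<alpha> + s * \<gamma> \<alpha>) (x + s *\<^sub>R \<xi>) k) has_vector_derivative
      orbit_var (\<lambda>\<alpha>. c \<alpha> + t * \<gamma> \<alpha>) (x + t *\<^sub>R \<xi>) \<gamma> \<xi> k) (at t) \<and>
   ((\<lambda>s. tangent (\<lambda>\<alpha>. c \<alpha> + s * \<gamma> \<alpha>) (x + s *\<^sub>R \<xi>) (v + s *\<^sub>R \<nu>) k) has_vector_derivative
      tangent_var (\<lambda>\<alpha>. c \<alpha> + t * \<gamma> \<alpha>) (x + t *\<^sub>R \<xi>) (v + t *\<^sub>R \<nu>) \<gamma> \<xi> \<nu> k) (at t)"
proof (induction k)
  case 0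
  have "((\<lambda>s. y + s *\<^sub>R \<eta>) has_vector_derivative \<eta>) (at t)" for y \<eta> :: "real^'d"
    using has_vector_derivative_add[OF has_vector_derivative_const
        has_vector_derivative_scaleR[OF DERIV_ident has_vector_derivative_const[of \<eta>]]] by simp
  then show ?case by simp
next
  case (Suc k)
  note orbit_k = Suc.IH[THEN conjunct1] and tangent_k = Suc.IH[THEN conjunct2]
  show ?case
    using has_vector_derivative_perturb[OF orbit_k, of c \<gamma>]
      has_vector_derivative_pert_deriv[OF orbit_k tangent_k, of c \<gamma>]
    by (simp add: orbit_Suc)
qed

lemma continuous_on_pert_poly [continuous_intros]:
  assumes "continuous_on S C" "continuous_on S Z"
  shows "continuous_on S (\<lambda>p. pert_poly (C p) (Z p))"
  unfolding pert_poly_def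
  using assms continuous_on_compose2[OF Ck_imp_continuous_on[OF Ck_monomial[of 0]]]
  by (intro continuous_intros continuous_on_product_then_coordinatewise[OF assms(1)]) auto

lemma continuous_on_pert_poly_deriv [continuous_intros]:
  assumes "continuous_on S C" "continuous_on S Z" "continuous_on S W"
  shows "continuous_on S (\<lambda>p. pert_poly_deriv (C p) (Z p) (W p))"
  unfolding pert_poly_deriv_def
  by (intro continuous_intros continuous_on_product_then_coordinatewise[OF assms(1)]
      continuous_on_deriv1[OF Ck_monomial assms(2,3)])

lemma continuous_on_pert_deriv [continuous_intros]:
  assumes "continuous_on S C" "continuous_on S Z" "continuous_on S W"
  shows "continuous_on S (\<lambda>p. pert_deriv (C p) (Z p) (W p))"
  unfolding pert_deriv_def
  by (intro continuous_intros continuous_on_pert_poly_deriv[OF assms]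
      continuous_on_deriv1[OF phi_Ck_Suc assms(2,3)])

lemma continuous_on_pert_deriv2 [continuous_intros]:
  assumes "continuous_on S C" "continuous_on S Z" "continuous_on S A" "continuous_on S W"
  shows "continuous_on S (\<lambda>p. pert_deriv2 (C p) (Z p) (A p) (W p))"
  unfolding pert_deriv2_def pert_poly_deriv2_def
  by (intro continuous_intros continuous_on_product_then_coordinatewise[OF assms(1)]
      continuous_on_deriv2[OF phi_Ck_Suc_Suc assms(2-4)] continuous_on_deriv2[OF Ck_monomial assms(2-4)])

lemma continuous_on_orbit_tangent_vars:
  assumes "continuous_on S C" "continuous_on S X" "continuous_on S V"
    and "continuous_on S G" "continuous_on S Xi" "continuous_on S N"
  shows "continuous_on S (\<lambda>p. orbit (C p) (X p) k) \<and>
         continuous_on S (\<lambda>p. tangent (C p) (X p) (V p) k) \<and>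
         continuous_on S (\<lambda>p. orbit_var (C p) (X p) (G p) (Xi p) k) \<and>
         continuous_on S (\<lambda>p. tangent_var (C p) (X p) (V p) (G p) (Xi p) (N p) k)"
proof (induction k)
  case 0 then show ?case using assms by simp
next
  case (Suc k)
  have "continuous_on S (\<lambda>p. \<phi> (orbit (C p) (X p) k))"
    using Suc continuous_on_compose2[OF Ck_imp_continuous_on[OF phi_C2]] by blast
  with Suc assms show ?case
    unfolding orbit_Suc perturb_eq tangent.simps orbit_var.simps tangent_var.simps
    by (intro conjI continuous_on_add continuous_on_scaleR continuous_on_const
        continuous_on_pert_poly continuous_on_pert_deriv continuous_on_pert_deriv2
        continuous_on_pert_poly_deriv) blast+
qed

lemma pert_poly_if_poly_deg_le:
  "poly_deg_le n f \<Longrightarrow> n \<le> 2 * D - 1 \<Longrightarrow> \<exists>\<gamma>. f = pert_poly \<gamma>"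
proof (induction rule: poly_deg_le.induct)
  case (monomial \<alpha> n)
  then have "\<alpha> \<in> mindex D" by (simp add: mindex_def)
  then have "monomial \<alpha> = pert_poly (unit_coeffs \<alpha>)" by (simp add: pert_poly_unit_coeffs fun_eq_iff)
  then show ?case by blast
next
  case (zero n) then show ?case by (intro exI[of _ "\<lambda>_. 0"]) (simp add: pert_poly_def[abs_def])
next
  case (add n f g)
  then obtain g1 g2 where "f = pert_poly g1" "g = pert_poly g2" by auto
  then show ?case
    using pert_poly_lincomb[of 1 g1 1 g2] by (intro exI[of _ "\<lambda>\<alpha>. 1 * g1 \<alpha> + 1 * g2 \<alpha>"]) simp
next
  case (scale n f a)
  then obtain g1 where "f = pert_poly g1" by auto
  then show ?case
    using pert_poly_lincomb[of a g1 0 g1] by (intro exI[of _ "\<lambda>\<alpha>. a * g1 \<alpha> + 0 * g1 \<alpha>"]) simp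
qed

lemma pert_poly_deriv_eq: "(pert_poly \<gamma> has_derivative Q) (at z) \<Longrightarrow> pert_poly_deriv \<gamma> z = Q"
  using has_derivative_pert_poly has_derivative_unique by blast

text \<open>The interpolating polynomial is \<open>(z - y j0) \<bullet> w\<close> times the product of the
  \<open>\<bar>z - y m\<bar>\<^sup>2\<close> over \<open>m \<noteq> j0\<close>; its degree \<open>2K - 1\<close> is at most \<open>2D - 1\<close>.\<close>

lemma exists_pert_poly_interpolating:
  fixes ys :: "nat \<Rightarrow> real^'d"
  assumes inj: "inj_on ys {..<K}" and j0: "j0 < K" and KD: "K \<le> D" and w: "w \<noteq> 0"
  obtains \<gamma> where "\<And>m. m < K \<Longrightarrow> pert_poly \<gamma> (ys m) = 0"
    and "\<And>m. m < K \<Longrightarrow> m \<noteq> j0 \<Longrightarrow> pert_poly_deriv \<gamma> (ys m) = (\<lambda>h. 0)"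
    and "pert_poly_deriv \<gamma> (ys j0) w \<noteq> 0"
proof -
  define M where "M = {..<K} - {j0}"
  define sq where "sq m z = (z - ys m) \<bullet> (z - ys m)" for m z
  define q where "q z = ((z - ys j0) \<bullet> w) * (\<Prod>m\<in>M. sq m z)" for z
  have "finite M" by (simp add: M_def)
  have "poly_deg_le (1 + 2 * card M) q"
    unfolding q_def sq_def
    using poly_deg_le_prod[OF \<open>finite M\<close> poly_deg_le_inner_self_diff]
    by (intro poly_deg_le_mult poly_deg_le_inner_diff) (simp add: mult.commute)
  moreover have "1 + 2 * card M \<le> 2 * D - 1" using j0 KD by (simp add: M_def)
  ultimately obtain \<gamma> where q: "q = pert_poly \<gamma>" using pert_poly_if_poly_deg_le by blast
  have sq_zero: "sq m (ys m) = 0" for m by (simp add: sq_def)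
  have "(q has_derivative (\<lambda>h. ((z - ys j0) \<bullet> w) *
      (\<Sum>i\<in>M. ((z - ys i) \<bullet> h + h \<bullet> (z - ys i)) * (\<Prod>m\<in>M - {i}. sq m z))
      + (h \<bullet> w) * (\<Prod>m\<in>M. sq m z))) (at z)" for z
    unfolding q_def[abs_def] sq_def by (rule derivative_eq_intros has_derivative_prod refl | simp)+
  then have q_deriv: "pert_poly_deriv \<gamma> z = (\<lambda>h. ((z - ys j0) \<bullet> w) *
      (\<Sum>i\<in>M. ((z - ys i) \<bullet> h + h \<bullet> (z - ys i)) * (\<Prod>m\<in>M - {i}. sq m z))
      + (h \<bullet> w) * (\<Prod>m\<in>M. sq m z))" for z
    by (simp add: pert_poly_deriv_eq flip: q)
  show ?thesis
  proof
    fix m assume "m < K"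
    then show "pert_poly \<gamma> (ys m) = 0"
      using \<open>finite M\<close> sq_zero by (cases "m = j0") (auto simp: q[symmetric] q_def M_def)
  next
    fix m assume m: "m < K" "m \<noteq> j0"
    then have "m \<in> M" by (simp add: M_def)
    have prod_zero: "(\<Prod>m'\<in>N. sq m' (ys m)) = 0" if "m \<in> N" "N \<subseteq> M" for N
      using that \<open>finite M\<close> sq_zero by (intro prod_zero) (auto intro: finite_subset)
    have summand_zero:
      "((ys m - ys i) \<bullet> h + h \<bullet> (ys m - ys i)) * (\<Prod>m'\<in>M - {i}. sq m' (ys m)) = 0" for i h
      using \<open>m \<in> M\<close> by (cases "i = m") (simp_all add: prod_zero)
    show "pert_poly_deriv \<gamma> (ys m) = (\<lambda>h. 0)"
    proof
      fix h
      have "(\<Sum>i\<in>M. ((ys m - ys i) \<bullet> h + h \<bullet> (ys m - ys i)) * (\<Prod>m'\<in>M - {i}. sq m' (ys m))) = 0"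
        using summand_zero by (intro sum.neutral) blast
      then show "pert_poly_deriv \<gamma> (ys m) h = 0" using \<open>m \<in> M\<close> by (simp add: q_deriv prod_zero)
    qed
  next
    have "sq m (ys j0) \<noteq> 0" if "m \<in> M" for m
      using that inj j0 by (auto simp: sq_def M_def inj_on_def)
    then show "pert_poly_deriv \<gamma> (ys j0) w \<noteq> 0"
      using \<open>finite M\<close> w by (simp add: q_deriv)
  qed
qed

lemma inj_pert_deriv_if_diffeomorphism:
  assumes "Ck_diffeomorphism (Suc k) (perturb i1 D \<phi> c)"
  shows "inj (pert_deriv c z)"
  using assms has_derivative_perturb
  by (intro has_derivative_inj_if_inverse_differentiable) (auto simp: Ck_diffeomorphism_def Ck_Suc_iff)

lemma tangent_nonzero:
  assumes "\<And>z. inj (pert_deriv c z)" and "v \<noteq> 0"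
  shows "tangent c x v k \<noteq> 0"
proof (induction k)
  case (Suc k)
  have "linear (pert_deriv c (orbit c x k))"
    by (rule linearI) (simp_all add: pert_deriv_add pert_deriv_scale)
  with Suc assms(1)[of "orbit c x k"] show ?case by (auto simp: linear_injective_0)
qed (use assms(2) in simp)

lemma exists_param_direction_first_visible_at:
  assumes inj_deriv: "\<And>z. inj (pert_deriv c z)" and v: "v \<noteq> 0"
    and inj_orbit: "inj_on (orbit c x) {..<K}" and KD: "K \<le> D" and j: "1 \<le> j" "j \<le> K"
  shows "\<exists>\<gamma>. (\<forall>i<j. tangent_var c x v \<gamma> 0 0 i $ i1 = 0) \<and> tangent_var c x v \<gamma> 0 0 j $ i1 \<noteq> 0"
proof -
  define j0 where "j0 = j - 1"
  have j0K: "j0 < K" and j_eq: "j = Suc j0" using j by (auto simp: j0_def)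
  obtain \<gamma> where vanish: "\<And>m. m < K \<Longrightarrow> pert_poly \<gamma> (orbit c x m) = 0"
    and flat: "\<And>m. m < K \<Longrightarrow> m \<noteq> j0 \<Longrightarrow> pert_poly_deriv \<gamma> (orbit c x m) = (\<lambda>h. 0)"
    and kick: "pert_poly_deriv \<gamma> (orbit c x j0) (tangent c x v j0) \<noteq> 0"
    using exists_pert_poly_interpolating[OF inj_orbit j0K KD tangent_nonzero[OF inj_deriv v, of x j0]]
    by blast
  have orbit_var_0: "orbit_var c x \<gamma> 0 m = 0" if "m \<le> K" for m
    using that by (induction m) (auto simp: pert_deriv_zero vanish)
  have tangent_var_0: "tangent_var c x v \<gamma> 0 0 m = 0" if "m \<le> j0" for m
    using that j0K
    by (induction m) (auto simp: orbit_var_0 pert_deriv2_zero pert_deriv_zero flat)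
  have "tangent_var c x v \<gamma> 0 0 j = pert_poly_deriv \<gamma> (orbit c x j0) (tangent c x v j0) *\<^sub>R e1"
    using j0K by (simp add: j_eq orbit_var_0 tangent_var_0 pert_deriv2_zero pert_deriv_zero)
  with kick have "tangent_var c x v \<gamma> 0 0 j $ i1 \<noteq> 0" by (simp add: e1_def)
  moreover have "tangent_var c x v \<gamma> 0 0 i $ i1 = 0" if "i < j" for i
    using that tangent_var_0 by (simp add: j_eq less_Suc_eq_le)
  ultimately show ?thesis by blast
qed

definition delay_param_deriv ::
  "(('d \<Rightarrow> nat) \<Rightarrow> real) \<Rightarrow> real^'d \<Rightarrow> real^'d \<Rightarrow> ('k::finite \<Rightarrow> nat) \<Rightarrow> (('d \<Rightarrow> nat) \<Rightarrow> real) \<Rightarrow> real^'k"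
  where "delay_param_deriv c x v \<iota> \<gamma> = (\<chi> \<kappa>. tangent_var c x v \<gamma> 0 0 (\<iota> \<kappa>) $ i1)"

lemma span_delay_param_deriv_eq_UNIV:
  fixes \<iota> :: "'k::finite \<Rightarrow> nat"
  assumes \<iota>: "bij_betw \<iota> UNIV {1..CARD('k)}"
    and inj_deriv: "\<And>z. inj (pert_deriv c z)" and v: "v \<noteq> 0"
    and inj_orbit: "inj_on (orbit c x) {..<CARD('k)}" and KD: "CARD('k) \<le> D"
  shows "span ((\<lambda>\<alpha>. delay_param_deriv c x v \<iota> (unit_coeffs \<alpha>)) ` mindex D) = UNIV"
proof -
  let ?K = "CARD('k)"
  have "\<forall>j\<in>{1..?K}. \<exists>\<gamma>. (\<forall>i<j. tangent_var c x v \<gamma> 0 0 i $ i1 = 0) \<and> tangent_var c x v \<gamma> 0 0 j $ i1 \<noteq> 0"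
    using exists_param_direction_first_visible_at[OF inj_deriv v inj_orbit KD] by simp
  then obtain \<Gamma> where \<Gamma>: "\<And>j. j \<in> {1..?K} \<Longrightarrow>
      (\<forall>i<j. tangent_var c x v (\<Gamma> j) 0 0 i $ i1 = 0) \<and> tangent_var c x v (\<Gamma> j) 0 0 j $ i1 \<noteq> 0"
    by metis
  have "span ((\<lambda>j. delay_param_deriv c x v \<iota> (\<Gamma> j)) ` {1..?K}) = UNIV"
  proof (rule span_triangular_eq_UNIV[OF \<iota>])
    fix j \<kappa> assume "j \<in> {1..?K}" "\<iota> \<kappa> < j"
    then show "delay_param_deriv c x v \<iota> (\<Gamma> j) $ \<kappa> = 0" using \<Gamma> by (simp add: delay_param_deriv_def)
  next
    fix \<kappa>
    have "\<iota> \<kappa> \<in> {1..?K}" using \<iota> by (auto simp: bij_betw_def)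
    then show "delay_param_deriv c x v \<iota> (\<Gamma> (\<iota> \<kappa>)) $ \<kappa> \<noteq> 0" using \<Gamma> by (simp add: delay_param_deriv_def)
  qed
  moreover have "(\<lambda>j. delay_param_deriv c x v \<iota> (\<Gamma> j)) ` {1..?K}
      \<subseteq> span ((\<lambda>\<alpha>. delay_param_deriv c x v \<iota> (unit_coeffs \<alpha>)) ` mindex D)"
  proof (rule image_subsetI)
    fix j
    have "delay_param_deriv c x v \<iota> (\<Gamma> j)
        = (\<Sum>\<alpha>\<in>mindex D. \<Gamma> j \<alpha> *\<^sub>R delay_param_deriv c x v \<iota> (unit_coeffs \<alpha>))"
      unfolding delay_param_deriv_def
      by (subst tangent_var_param_expand) (simp add: vec_eq_iff sum_component)
    then show "delay_param_deriv c x v \<iota> (\<Gamma> j)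
        \<in> span ((\<lambda>\<alpha>. delay_param_deriv c x v \<iota> (unit_coeffs \<alpha>)) ` mindex D)"
      by (simp only:) (intro span_sum span_scale span_base imageI)
  qed
  ultimately show ?thesis by (metis span_minimal subspace_span top.extremum_uniqueI)
qed

definition param_jacobian ::
  "(('d \<Rightarrow> nat) \<Rightarrow> real) \<Rightarrow> real^'d \<Rightarrow> real^'d \<Rightarrow> ('k::finite \<Rightarrow> nat) \<Rightarrow> ('k \<Rightarrow> ('d \<Rightarrow> nat)) \<Rightarrow>
    real^'k \<Rightarrow> real^'k"
  where "param_jacobian c x v \<iota> \<sigma> u = delay_param_deriv c x v \<iota> (extend_coeffs \<sigma> u)"

lemma linear_param_jacobian:
  fixes \<iota> :: "'k::finite \<Rightarrow> nat" and \<sigma> :: "'k \<Rightarrow> ('d \<Rightarrow> nat)"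
  shows "linear (param_jacobian c x v \<iota> \<sigma>)"
proof (rule linearI)
  fix u1 u2 :: "real^'k"
  show "param_jacobian c x v \<iota> \<sigma> (u1 + u2) = param_jacobian c x v \<iota> \<sigma> u1 + param_jacobian c x v \<iota> \<sigma> u2"
    using tangent_var_lincomb[of c x v 1 "extend_coeffs \<sigma> u1" 1 "extend_coeffs \<sigma> u2" 0 0 0 0]
      extend_coeffs_lincomb[of \<sigma> 1 u1 1 u2]
    by (simp add: param_jacobian_def delay_param_deriv_def vec_eq_iff)
next
  fix r and u :: "real^'k"
  show "param_jacobian c x v \<iota> \<sigma> (r *\<^sub>R u) = r *\<^sub>R param_jacobian c x v \<iota> \<sigma> u"
    using tangent_var_lincomb[of c x v r "extend_coeffs \<sigma> u" 0 "extend_coeffs \<sigma> u" 0 0 0 0]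
      extend_coeffs_lincomb[of \<sigma> r u 0 u]
    by (simp add: param_jacobian_def delay_param_deriv_def vec_eq_iff)
qed

lemma exists_inj_param_jacobian:
  fixes \<iota> :: "'k::finite \<Rightarrow> nat"
  assumes \<iota>: "bij_betw \<iota> UNIV {1..CARD('k)}"
    and inj_deriv: "\<And>z. inj (pert_deriv c z)" and v: "v \<noteq> 0"
    and inj_orbit: "inj_on (orbit c x) {..<CARD('k)}" and KD: "CARD('k) \<le> D"
  obtains \<sigma> :: "'k \<Rightarrow> ('d \<Rightarrow> nat)"
  where "inj \<sigma>" "range \<sigma> \<subseteq> mindex D" "inj (param_jacobian c x v \<iota> \<sigma>)"
proof -
  let ?L = "\<lambda>\<alpha>. delay_param_deriv c x v \<iota> (unit_coeffs \<alpha>)"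
  obtain B where B: "B \<subseteq> mindex D" "card B = DIM(real^'k)" "span (?L ` B) = UNIV"
    using spanning_image_contains_basis[OF finite_mindex
        span_delay_param_deriv_eq_UNIV[OF \<iota> inj_deriv v inj_orbit KD]] by blast
  then have "finite B" using finite_mindex finite_subset by blast
  with B(2) obtain \<sigma> where \<sigma>: "bij_betw \<sigma> (UNIV::'k set) B"
    using finite_same_card_bij[of "UNIV::'k set" B] by auto
  then have "inj \<sigma>" and range_\<sigma>: "range \<sigma> = B" by (auto simp: bij_betw_def)
  have "?L ` B \<subseteq> range (param_jacobian c x v \<iota> \<sigma>)"
  proof (rule image_subsetI)
    fix \<alpha> assume "\<alpha> \<in> B"
    then obtain \<kappa> where "\<alpha> = \<sigma> \<kappa>" using range_\<sigma> by auto
    then have "?L \<alpha> = param_jacobian c x v \<iota> \<sigma> (axis \<kappa> 1)"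
      using \<open>inj \<sigma>\<close> by (simp add: param_jacobian_def extend_coeffs_axis)
    then show "?L \<alpha> \<in> range (param_jacobian c x v \<iota> \<sigma>)" by simp
  qed
  moreover have "subspace (range (param_jacobian c x v \<iota> \<sigma>))"
    using linear_param_jacobian by (metis linear_subspace_image subspace_UNIV)
  ultimately have "surj (param_jacobian c x v \<iota> \<sigma>)"
    using B(3) by (metis span_minimal top.extremum_uniqueI)
  then have "inj (param_jacobian c x v \<iota> \<sigma>)"
    using linear_param_jacobian linear_surjective_imp_injective by blast
  with \<open>inj \<sigma>\<close> range_\<sigma> B(1) that show ?thesis by blast
qed

definition delay_tangent ::
  "('k::finite \<Rightarrow> nat) \<Rightarrow> (('d \<Rightarrow> nat) \<Rightarrow> real) \<Rightarrow> real^'d \<Rightarrow> real^'d \<Rightarrow> real^'k" where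
  "delay_tangent \<iota> c x v = (\<chi> \<kappa>. tangent c x v (\<iota> \<kappa>) $ i1)"

definition regular_zero_params ::
  "('k::finite \<Rightarrow> nat) \<Rightarrow> ('k \<Rightarrow> ('d \<Rightarrow> nat)) \<Rightarrow> (('d \<Rightarrow> nat) \<Rightarrow> real) set" where
  "regular_zero_params \<iota> \<sigma> = {c \<in> space (PiM (mindex D) (\<lambda>_. lborel)).
     \<exists>x v. delay_tangent \<iota> c x v = 0 \<and> inj (param_jacobian c x v \<iota> \<sigma>)}"

lemma continuous_on_delay_tangent_var:
  fixes \<iota> :: "'k::finite \<Rightarrow> nat"
  assumes "continuous_on S C" "continuous_on S X" "continuous_on S V"
    and "continuous_on S G" "continuous_on S Xi" "continuous_on S N"
  shows "continuous_on S (\<lambda>p. (\<chi> \<kappa>. tangent_var (C p) (X p) (V p) (G p) (Xi p) (N p) (\<iota> \<kappa>) $ i1) :: real^'k)"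
  using continuous_on_orbit_tangent_vars[OF assms]
  by (intro continuous_on_vec_lambda continuous_on_component) blast

lemma continuous_on_delay_tangent:
  assumes "continuous_on S C" "continuous_on S X" "continuous_on S V"
  shows "continuous_on S (\<lambda>p. delay_tangent \<iota> (C p) (X p) (V p))"
  using continuous_on_orbit_tangent_vars[OF assms continuous_on_const continuous_on_const continuous_on_const]
  unfolding delay_tangent_def by (intro continuous_on_vec_lambda continuous_on_component) blast

text \<open>Injectivity of the parameter Jacobian, made quantitative, cuts out a countable union of
  compact sets; this gives measurability.\<close>

definition bounded_regular_zeros :: "('k::finite \<Rightarrow> nat) \<Rightarrow> ('k \<Rightarrow> ('d \<Rightarrow> nat)) \<Rightarrow> nat \<Rightarrow>
    ((('d \<Rightarrow> nat) \<Rightarrow> real) \<times> (real^'d) \<times> (real^'d)) set" where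
  "bounded_regular_zeros \<iota> \<sigma> n = {(c, x, v). c \<in> PiE (mindex D) (\<lambda>_. {- real n..real n}) \<and>
     norm x \<le> n \<and> norm v \<le> n \<and> delay_tangent \<iota> c x v = 0 \<and>
     (\<forall>u. norm u \<le> real (Suc n) * norm (param_jacobian c x v \<iota> \<sigma> u))}"

lemma compact_bounded_regular_zeros:
  fixes \<iota> :: "'k::finite \<Rightarrow> nat" and \<sigma> :: "'k \<Rightarrow> ('d \<Rightarrow> nat)"
  shows "compact (bounded_regular_zeros \<iota> \<sigma> n)"
proof -
  have "bounded_regular_zeros \<iota> \<sigma> n =
      (PiE (mindex D) (\<lambda>_. {- real n..real n}) \<times> cball 0 (real n) \<times> cball 0 (real n)) \<inter>
      ({p. delay_tangent \<iota> (fst p) (fst (snd p)) (snd (snd p)) = 0} \<inter>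
       (\<Inter>u. {p. norm u \<le> real (Suc n) * norm (param_jacobian (fst p) (fst (snd p)) (snd (snd p)) \<iota> \<sigma> u)}))"
    by (auto simp: bounded_regular_zeros_def)
  moreover have "closed {p. delay_tangent \<iota> (fst p) (fst (snd p)) (snd (snd p)) = 0}"
    by (intro closed_Collect_eq continuous_on_delay_tangent continuous_intros)
  moreover have "closed {p. norm u \<le> real (Suc n) * norm (param_jacobian (fst p) (fst (snd p)) (snd (snd p)) \<iota> \<sigma> u)}"
    for u :: "real^'k"
    unfolding param_jacobian_def delay_param_deriv_def
    by (intro closed_Collect_le continuous_on_delay_tangent_var continuous_intros)
  ultimately show ?thesis
    by (simp add: compact_Int_closed compact_Times compact_PiE_atLeastAtMost closed_Int closed_INT)
qed

lemma regular_zero_params_eq_Union: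
  "regular_zero_params \<iota> \<sigma> = (\<Union>n. fst ` bounded_regular_zeros \<iota> \<sigma> n) \<inter> space (PiM (mindex D) (\<lambda>_. lborel))"
proof (intro set_eqI iffI)
  fix c assume "c \<in> regular_zero_params \<iota> \<sigma>"
  then obtain x v where c: "c \<in> space (PiM (mindex D) (\<lambda>_. lborel))"
    and zero: "delay_tangent \<iota> c x v = 0" and inj: "inj (param_jacobian c x v \<iota> \<sigma>)"
    by (auto simp: regular_zero_params_def)
  obtain B where B: "B > 0" "\<And>u. B * norm u \<le> norm (param_jacobian c x v \<iota> \<sigma> u)"
    using linear_inj_bounded_below_pos[OF linear_param_jacobian inj] by blast
  obtain n :: nat where n: "(\<Sum>\<alpha>\<in>mindex D. \<bar>c \<alpha>\<bar>) + norm x + norm v + 1 / B \<le> real n"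
    using real_arch_simple by blast
  have sum_ge: "0 \<le> (\<Sum>\<alpha>\<in>mindex D. \<bar>c \<alpha>\<bar>)" "0 \<le> 1 / B" using B(1) by (auto intro: sum_nonneg)
  have "\<bar>c \<alpha>\<bar> \<le> real n" if "\<alpha> \<in> mindex D" for \<alpha>
  proof -
    have "\<bar>c \<alpha>\<bar> \<le> (\<Sum>\<alpha>\<in>mindex D. \<bar>c \<alpha>\<bar>)"
      using that finite_mindex by (intro member_le_sum) auto
    then show ?thesis using n sum_ge norm_ge_zero[of x] norm_ge_zero[of v] by linarith
  qed
  then have "c \<in> PiE (mindex D) (\<lambda>_. {- real n..real n})"
    using c by (force simp: space_PiM PiE_def Pi_def abs_le_iff)
  moreover have "norm u \<le> real (Suc n) * norm (param_jacobian c x v \<iota> \<sigma> u)" for u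
  proof -
    have "1 / B \<le> real n" using n sum_ge norm_ge_zero[of x] norm_ge_zero[of v] by linarith
    then have inv_B: "1 / B \<le> real (Suc n)" by linarith
    have "norm u \<le> (1 / B) * norm (param_jacobian c x v \<iota> \<sigma> u)"
      using B by (simp add: field_simps)
    also have "\<dots> \<le> real (Suc n) * norm (param_jacobian c x v \<iota> \<sigma> u)"
      using inv_B by (rule mult_right_mono) simp
    finally show ?thesis .
  qed
  moreover have "norm x \<le> n" "norm v \<le> n"
    using n sum_ge norm_ge_zero[of x] norm_ge_zero[of v] by linarith+
  ultimately have "(c, x, v) \<in> bounded_regular_zeros \<iota> \<sigma> n"
    using zero by (simp add: bounded_regular_zeros_def)
  then show "c \<in> (\<Union>n. fst ` bounded_regular_zeros \<iota> \<sigma> n) \<inter> space (PiM (mindex D) (\<lambda>_. lborel))"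
    using c by force
next
  fix c assume "c \<in> (\<Union>n. fst ` bounded_regular_zeros \<iota> \<sigma> n) \<inter> space (PiM (mindex D) (\<lambda>_. lborel))"
  then obtain n x v where c: "c \<in> space (PiM (mindex D) (\<lambda>_. lborel))"
    and "(c, x, v) \<in> bounded_regular_zeros \<iota> \<sigma> n" by auto
  then have zero: "delay_tangent \<iota> c x v = 0"
    and bound: "\<And>u. norm u \<le> real (Suc n) * norm (param_jacobian c x v \<iota> \<sigma> u)"
    by (auto simp: bounded_regular_zeros_def)
  have "inj (param_jacobian c x v \<iota> \<sigma>)"
    unfolding linear_injective_0[OF linear_param_jacobian]
    using bound by (metis mult_zero_right norm_eq_zero norm_le_zero_iff)
  with c zero show "c \<in> regular_zero_params \<iota> \<sigma>" by (auto simp: regular_zero_params_def)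
qed

lemma sets_regular_zero_params: "regular_zero_params \<iota> \<sigma> \<in> sets (PiM (mindex D) (\<lambda>_. lborel))"
proof -
  have "fst ` bounded_regular_zeros \<iota> \<sigma> n \<in> sets borel" for n
    by (intro borel_closed compact_imp_closed compact_continuous_image compact_bounded_regular_zeros
        continuous_on_fst continuous_on_id)
  then have "(\<Union>n. fst ` bounded_regular_zeros \<iota> \<sigma> n) \<in> sets borel" by blast
  from measurable_sets[OF borel_measurable_ident_PiM_lborel this]
  show ?thesis by (simp add: regular_zero_params_eq_Union vimage_def)
qed

lemma has_vector_derivative_delay_tangent:
  fixes \<iota> :: "'k::finite \<Rightarrow> nat"
  shows "((\<lambda>s. delay_tangent \<iota> (\<lambda>\<alpha>. c \<alpha> + s * \<gamma> \<alpha>) (x + s *\<^sub>R \<xi>) (v + s *\<^sub>R \<nu>)) has_vector_derivative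
           (\<chi> \<kappa>. tangent_var c x v \<gamma> \<xi> \<nu> (\<iota> \<kappa>) $ i1)) (at 0)"
proof (rule has_vector_derivative_vec_lambda)
  fix \<kappa>
  have "((\<lambda>s. tangent (\<lambda>\<alpha>. c \<alpha> + s * \<gamma> \<alpha>) (x + s *\<^sub>R \<xi>) (v + s *\<^sub>R \<nu>) (\<iota> \<kappa>)) has_vector_derivative
      tangent_var c x v \<gamma> \<xi> \<nu> (\<iota> \<kappa>)) (at 0)"
    using has_vector_derivative_orbit_tangent[of c \<gamma> x \<xi> "\<iota> \<kappa>" 0 v \<nu>] by simp
  from has_vector_derivative_vec_nth[OF this, of i1]
  show "((\<lambda>s. delay_tangent \<iota> (\<lambda>\<alpha>. c \<alpha> + s * \<gamma> \<alpha>) (x + s *\<^sub>R \<xi>) (v + s *\<^sub>R \<nu>) $ \<kappa>)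
      has_vector_derivative (\<chi> \<kappa>. tangent_var c x v \<gamma> \<xi> \<nu> (\<iota> \<kappa>) $ i1) $ \<kappa>) (at 0)"
    by (simp add: delay_tangent_def)
qed

lemma linear_delay_tangent_var:
  fixes \<iota> :: "'k::finite \<Rightarrow> nat" and \<sigma> :: "'k \<Rightarrow> ('d \<Rightarrow> nat)"
  shows "linear (\<lambda>h :: (real^'k) \<times> (real^'d) \<times> (real^'d).
    (\<chi> \<kappa>. tangent_var c x v (extend_coeffs \<sigma> (fst h)) (fst (snd h)) (snd (snd h)) (\<iota> \<kappa>) $ i1) :: real^'k)"
proof (rule linearI)
  fix h1 h2 :: "(real^'k) \<times> (real^'d) \<times> (real^'d)"
  show "(\<chi> \<kappa>. tangent_var c x v (extend_coeffs \<sigma> (fst (h1 + h2))) (fst (snd (h1 + h2)))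
          (snd (snd (h1 + h2))) (\<iota> \<kappa>) $ i1)
      = (\<chi> \<kappa>. tangent_var c x v (extend_coeffs \<sigma> (fst h1)) (fst (snd h1)) (snd (snd h1)) (\<iota> \<kappa>) $ i1)
        + (\<chi> \<kappa>. tangent_var c x v (extend_coeffs \<sigma> (fst h2)) (fst (snd h2)) (snd (snd h2)) (\<iota> \<kappa>) $ i1)"
    using tangent_var_lincomb[of c x v 1 "extend_coeffs \<sigma> (fst h1)" 1 "extend_coeffs \<sigma> (fst h2)"
        "fst (snd h1)" "fst (snd h2)" "snd (snd h1)" "snd (snd h2)"]
      extend_coeffs_lincomb[of \<sigma> 1 "fst h1" 1 "fst h2"]
    by (simp add: vec_eq_iff)
next
  fix r and h :: "(real^'k) \<times> (real^'d) \<times> (real^'d)"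
  show "(\<chi> \<kappa>. tangent_var c x v (extend_coeffs \<sigma> (fst (r *\<^sub>R h))) (fst (snd (r *\<^sub>R h)))
          (snd (snd (r *\<^sub>R h))) (\<iota> \<kappa>) $ i1)
      = r *\<^sub>R (\<chi> \<kappa>. tangent_var c x v (extend_coeffs \<sigma> (fst h)) (fst (snd h)) (snd (snd h)) (\<iota> \<kappa>) $ i1)"
    using tangent_var_lincomb[of c x v r "extend_coeffs \<sigma> (fst h)" 0 "extend_coeffs \<sigma> (fst h)"
        "fst (snd h)" "fst (snd h)" "snd (snd h)" "snd (snd h)"]
      extend_coeffs_lincomb[of \<sigma> r "fst h" 0 "fst h"]
    by (simp add: vec_eq_iff)
qed

text \<open>Freezing the coefficients outside \<open>range \<sigma>\<close>, the remaining ones are the first factor of a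
  map \<open>(b, x, v) \<mapsto> delay_tangent\<close> from \<open>\<real>\<^sup>k \<times> \<real>\<^sup>2\<^sup>d\<close> to \<open>\<real>\<^sup>k\<close>.\<close>

lemma negligible_regular_zero_fiber:
  fixes \<iota> :: "'k::finite \<Rightarrow> nat" and \<sigma> :: "'k \<Rightarrow> ('d \<Rightarrow> nat)"
  assumes dim: "2 * CARD('d) < CARD('k)" and disj: "A \<inter> range \<sigma> = {}"
  shows "negligible {b. merge A (range \<sigma>) (cA, fun_of_vec \<sigma> b) \<in> regular_zero_params \<iota> \<sigma>}"
proof -
  define C where "C b = merge A (range \<sigma>) (cA, fun_of_vec \<sigma> b)" for b
  define F where "F p = delay_tangent \<iota> (C (fst p)) (fst (snd p)) (snd (snd p))"
    for p :: "(real^'k) \<times> (real^'d) \<times> (real^'d)"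
  define DF where "DF p h = (\<chi> \<kappa>. tangent_var (C (fst p)) (fst (snd p)) (snd (snd p))
      (extend_coeffs \<sigma> (fst h)) (fst (snd h)) (snd (snd h)) (\<iota> \<kappa>) $ i1)"
    for p h :: "(real^'k) \<times> (real^'d) \<times> (real^'d)"
  have "negligible {b. \<exists>y. F (b, y) = 0 \<and> inj (\<lambda>u. DF (b, y) (u, 0))}"
  proof (rule negligible_projection_regular_zeros)
    show "DIM((real^'d) \<times> (real^'d)) < DIM(real^'k)" using dim by simp
  next
    fix p h :: "(real^'k) \<times> (real^'d) \<times> (real^'d)"
    obtain b x v hb hx hv where ph: "p = (b, x, v)" "h = (hb, hx, hv)" by (cases p, cases h) auto
    show "((\<lambda>s. F (p + s *\<^sub>R h)) has_vector_derivative DF p h) (at 0)"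
      using has_vector_derivative_delay_tangent[of \<iota> "C b" "extend_coeffs \<sigma> hb" x hx v hv]
      by (simp add: F_def DF_def ph C_def merge_fun_of_vec_line[OF disj])
  next
    show "linear (DF p)" for p unfolding DF_def[abs_def] by (rule linear_delay_tangent_var)
  next
    show "continuous_on UNIV (\<lambda>p. DF p h)" for h
      unfolding DF_def C_def
      by (intro continuous_on_delay_tangent_var continuous_on_merge_fun_of_vec continuous_intros)
  qed
  moreover have "{b. C b \<in> regular_zero_params \<iota> \<sigma>} \<subseteq> {b. \<exists>y. F (b, y) = 0 \<and> inj (\<lambda>u. DF (b, y) (u, 0))}"
  proof
    fix b assume "b \<in> {b. C b \<in> regular_zero_params \<iota> \<sigma>}"
    then obtain x v where "delay_tangent \<iota> (C b) x v = 0" "inj (param_jacobian (C b) x v \<iota> \<sigma>)"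
      by (auto simp: regular_zero_params_def)
    moreover have "(\<lambda>u. DF (b, x, v) (u, 0)) = param_jacobian (C b) x v \<iota> \<sigma>"
      by (simp add: fun_eq_iff DF_def param_jacobian_def delay_param_deriv_def zero_prod_def)
    ultimately show "b \<in> {b. \<exists>y. F (b, y) = 0 \<and> inj (\<lambda>u. DF (b, y) (u, 0))}"
      unfolding F_def by (intro CollectI exI[of _ "(x, v)"]) simp
  qed
  ultimately show ?thesis unfolding C_def by (rule negligible_subset)
qed

lemma null_regular_zero_params:
  fixes \<iota> :: "'k::finite \<Rightarrow> nat" and \<sigma> :: "'k \<Rightarrow> ('d \<Rightarrow> nat)"
  assumes inj: "inj \<sigma>" and range: "range \<sigma> \<subseteq> mindex D" and dim: "2 * CARD('d) < CARD('k)"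
  shows "regular_zero_params \<iota> \<sigma> \<in> null_sets (PiM (mindex D) (\<lambda>_. lborel))"
proof -
  let ?A = "mindex D - range \<sigma>" and ?B = "range \<sigma>"
  have "emeasure (PiM (mindex D) (\<lambda>_. lborel)) (regular_zero_params \<iota> \<sigma>) = 0"
  proof (rule emeasure_PiM_eq_0_if_fibers_null[OF finite_mindex range sets_regular_zero_params])
    fix cA assume cA: "cA \<in> space (PiM ?A (\<lambda>_. lborel :: real measure))"
    define F where "F = {cB \<in> space (PiM ?B (\<lambda>_. lborel :: real measure)). merge ?A ?B (cA, cB) \<in> regular_zero_params \<iota> \<sigma>}"
    have "(\<lambda>cB. merge ?A ?B (cA, cB)) \<in> measurable (PiM ?B (\<lambda>_. lborel :: real measure)) (PiM (?A \<union> ?B) (\<lambda>_. lborel))"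
      by (rule measurable_compose[OF measurable_Pair1'[OF cA] measurable_merge])
    then have "(\<lambda>cB. merge ?A ?B (cA, cB)) \<in> measurable (PiM ?B (\<lambda>_. lborel :: real measure)) (PiM (mindex D) (\<lambda>_. lborel))"
      using range by (simp add: Un_absorb2)
    from measurable_sets[OF this sets_regular_zero_params]
    have F_sets: "F \<in> sets (PiM ?B (\<lambda>_. lborel :: real measure))" by (simp add: F_def vimage_def Int_def conj_commute)
    have "fun_of_vec \<sigma> -` F \<subseteq> {b. merge ?A ?B (cA, fun_of_vec \<sigma> b) \<in> regular_zero_params \<iota> \<sigma>}"
      by (auto simp: F_def)
    then have "negligible (fun_of_vec \<sigma> -` F)"
      using negligible_regular_zero_fiber[OF dim, where A = ?A and cA = cA] negligible_subset by blast
    moreover have "fun_of_vec \<sigma> -` F \<inter> space lborel \<in> sets lborel"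
      using measurable_sets[OF measurable_fun_of_vec F_sets] .
    ultimately have "emeasure lborel (fun_of_vec \<sigma> -` F \<inter> space lborel) = 0"
      by (intro emeasure_lborel_eq_0_if_negligible) simp_all
    then have "emeasure (distr lborel (PiM ?B (\<lambda>_. lborel :: real measure)) (fun_of_vec \<sigma>)) F = 0"
      by (simp add: emeasure_distr[OF measurable_fun_of_vec F_sets])
    then show "emeasure (PiM ?B (\<lambda>_. lborel :: real measure)) F = 0" by (simp add: distr_lborel_fun_of_vec[OF inj])
  qed
  then show ?thesis using sets_regular_zero_params by (simp add: null_sets_def)
qed

lemma delay_immersive_at_if_not_regular_zero_params:
  fixes \<iota> :: "'k::finite \<Rightarrow> nat"
  assumes \<iota>: "bij_betw \<iota> UNIV {1..CARD('k)}" and KD: "CARD('k) < D"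
    and diffeo: "Ck_diffeomorphism (Suc k) (perturb i1 D \<phi> c)"
    and no_per: "\<And>y j. 1 \<le> j \<Longrightarrow> j < 2 * D \<Longrightarrow> (perturb i1 D \<phi> c ^^ j) y = y \<Longrightarrow>
      perturb i1 D \<phi> c y = y"
    and not_fixed: "perturb i1 D \<phi> c x \<noteq> x"
    and c: "c \<in> space (PiM (mindex D) (\<lambda>_. lborel))"
    and generic: "\<And>\<sigma>. inj \<sigma> \<Longrightarrow> range \<sigma> \<subseteq> mindex D \<Longrightarrow> c \<notin> regular_zero_params \<iota> \<sigma>"
  shows "delay_immersive_at i1 D (perturb i1 D \<phi> c) x"
proof (rule ccontr)
  assume "\<not> delay_immersive_at i1 D (perturb i1 D \<phi> c) x"
  then obtain v where v: "v \<noteq> 0" "\<And>j. j < D \<Longrightarrow> tangent c x v j $ i1 = 0"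
    unfolding delay_immersive_at_iff by blast
  have "inj_on (orbit c x) {..<CARD('k)}"
    unfolding orbit_def[abs_def] using diffeo not_fixed no_per KD
    by (intro inj_on_funpow_orbit[where P = "2 * D"]) (auto simp: Ck_diffeomorphism_def bij_is_inj)
  then obtain \<sigma> :: "'k \<Rightarrow> ('d \<Rightarrow> nat)"
    where \<sigma>: "inj \<sigma>" "range \<sigma> \<subseteq> mindex D" "inj (param_jacobian c x v \<iota> \<sigma>)"
    using exists_inj_param_jacobian[OF \<iota> inj_pert_deriv_if_diffeomorphism[OF diffeo] v(1)] KD
    by auto
  have "\<iota> \<kappa> \<in> {1..CARD('k)}" for \<kappa> using \<iota> by (auto simp: bij_betw_def)
  then have "\<iota> \<kappa> < D" for \<kappa> using KD by (meson atLeastAtMost_iff le_less_trans)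
  then have "delay_tangent \<iota> c x v = 0" using v(2) by (simp add: delay_tangent_def vec_eq_iff)
  with c \<sigma>(3) have "c \<in> regular_zero_params \<iota> \<sigma>" by (auto simp: regular_zero_params_def)
  with generic \<sigma>(1,2) show False by blast
qed

lemma AE_not_regular_zero_params:
  fixes \<iota> :: "'k::finite \<Rightarrow> nat"
  assumes dim: "2 * CARD('d) < CARD('k)"
  shows "AE c in PiM (mindex D) (\<lambda>_. lborel).
    \<forall>\<sigma>::'k \<Rightarrow> ('d \<Rightarrow> nat). inj \<sigma> \<and> range \<sigma> \<subseteq> mindex D \<longrightarrow> c \<notin> regular_zero_params \<iota> \<sigma>"
proof -
  let ?\<Sigma> = "{\<sigma> :: 'k \<Rightarrow> ('d \<Rightarrow> nat). inj \<sigma> \<and> range \<sigma> \<subseteq> mindex D}"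
  have "finite (PiE (UNIV :: 'k set) (\<lambda>_. mindex D))" by (intro finite_PiE finite_mindex) simp
  moreover have "?\<Sigma> \<subseteq> PiE UNIV (\<lambda>_. mindex D)" by (auto simp: PiE_def Pi_def)
  ultimately have "finite ?\<Sigma>" by (rule finite_subset[rotated])
  then have "AE c in PiM (mindex D) (\<lambda>_. lborel). \<forall>\<sigma>\<in>?\<Sigma>. c \<notin> regular_zero_params \<iota> \<sigma>"
  proof (rule AE_finite_allI)
    fix \<sigma> assume "\<sigma> \<in> ?\<Sigma>"
    then have "regular_zero_params \<iota> \<sigma> \<in> null_sets (PiM (mindex D) (\<lambda>_. lborel))"
      using null_regular_zero_params[OF _ _ dim] by simp
    then show "AE c in PiM (mindex D) (\<lambda>_. lborel). c \<notin> regular_zero_params \<iota> \<sigma>"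
      by (rule AE_not_in)
  qed
  then show ?thesis by simp
qed

end

lemma perturb_zero: "perturb i1 D \<phi> (\<lambda>_. 0) = \<phi>"
  by (rule ext) (simp add: perturb_def)

theorem theorem21:
  fixes \<phi> :: "real^'d \<Rightarrow> real^'d" and i1 :: 'd and D m :: nat
    and r R a0 :: real and \<xi> :: "nat \<Rightarrow> (('d \<Rightarrow> nat) \<Rightarrow> real) \<Rightarrow> real^'d"
  assumes D_ge: "D \<ge> 4 * CARD('d)"
    and diffeo: "diffeomorphism \<phi>"
    and r_pos: "r > 0" and rR: "r \<le> R"
    and Kplus: "\<And>x j. x \<in> cball 0 r \<Longrightarrow> j \<le> D - 1 \<Longrightarrow> (\<phi> ^^ j) x \<in> cball 0 R"
    and a0_pos: "a0 > 0"
    and Kplus_c: "\<And>c x j. pnorm D c \<le> a0 \<Longrightarrow> x \<in> cball 0 r \<Longrightarrow> j \<le> D - 1 \<Longrightarrow>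
                   (perturb i1 D \<phi> c ^^ j) x \<in> cball 0 R"
    and C3: "\<And>c. pnorm D c \<le> a0 \<Longrightarrow> Ck_diffeomorphism 3 (perturb i1 D \<phi> c)"
    and fixpts: "\<And>c. pnorm D c \<le> a0 \<Longrightarrow>
                   {x. perturb i1 D \<phi> c x = x} = (\<lambda>i. \<xi> i c) ` {..<m} \<and> inj_on (\<lambda>i. \<xi> i c) {..<m}"
    and no_per: "\<And>c x k. pnorm D c \<le> a0 \<Longrightarrow> 1 \<le> k \<Longrightarrow> k < 2 * D \<Longrightarrow>
                   (perturb i1 D \<phi> c ^^ k) x = x \<Longrightarrow> perturb i1 D \<phi> c x = x"
    and hyp: "\<And>c i. pnorm D c \<le> a0 \<Longrightarrow> i < m \<Longrightarrow> hyperbolic_fixed_point (perturb i1 D \<phi> c) (\<xi> i c)"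
    and sep: "\<And>c i j. pnorm D c \<le> a0 \<Longrightarrow> i < m \<Longrightarrow> j < m \<Longrightarrow> i \<noteq> j \<Longrightarrow> \<xi> i c $ i1 \<noteq> \<xi> j c $ i1"
    and imm_fix: "\<And>c i. pnorm D c \<le> a0 \<Longrightarrow> i < m \<Longrightarrow> delay_immersive_at i1 D (perturb i1 D \<phi> c) (\<xi> i c)"
  shows "AE c in param_measure D. pnorm D c < a0 \<longrightarrow>
           (\<forall>x\<in>cball 0 r. delay_immersive_at i1 D (perturb i1 D \<phi> c) x)"
proof -
  have "pnorm D (\<lambda>_. 0) \<le> a0" using a0_pos by (simp add: pnorm_def)
  from C3[OF this] have "Ck 3 \<phi>" by (simp add: perturb_zero Ck_diffeomorphism_def)
  then have "Ck 2 \<phi>" by (rule Ck_mono) simp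
  interpret perturbed_family \<phi> i1 D by standard fact
  let ?K = "CARD(('d + 'd) option)"
  obtain \<iota> :: "('d + 'd) option \<Rightarrow> nat" where \<iota>: "bij_betw \<iota> UNIV {1..?K}"
    using finite_same_card_bij[of "UNIV :: ('d + 'd) option set" "{1..?K}"] by auto
  have "?K = 2 * CARD('d) + 1" "0 < CARD('d)" by simp_all
  with D_ge have dim: "2 * CARD('d) < ?K" and KD: "?K < D" by linarith+
  show ?thesis
    unfolding param_measure_def using AE_not_regular_zero_params[OF dim, of \<iota>] AE_space
  proof eventually_elim
    case (elim c)
    show ?case
    proof (intro impI ballI)
      fix x assume "pnorm D c < a0"
      then have c: "pnorm D c \<le> a0" by simp
      show "delay_immersive_at i1 D (perturb i1 D \<phi> c) x"
      proof (cases "perturb i1 D \<phi> c x = x")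
        case True
        then have "x \<in> (\<lambda>i. \<xi> i c) ` {..<m}" using fixpts[OF c] by blast
        then show ?thesis using imm_fix[OF c] by auto
      next
        case False
        with elim \<iota> KD C3[OF c] no_per[OF c] show ?thesis
          by (intro delay_immersive_at_if_not_regular_zero_params[where k = 2]) auto
      qed
    qed
  qed
qed

end
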